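(* In the setting described in the context, assume $\widetilde H$ is positive semi-definite on $L_{2,\mu}$. Then for every $k\in\mathbb N$, \[ \|H-S\|_{L_{2,\pi}\to L_{2,\pi}}^k\le\|H^{(k)}-S\|_{L_{2,\pi}\to L_{2,\pi}}. \]
   Context: Let $K\subseteq\mathbb R^d$ be Borel and $\rho:K\to[0,\infty)$ measurable with $0<\int_K\rho\,\mathrm dx<\infty$; $\pi(A)=\int_A\rho\,\mathrm dx/\int_K\rho\,\mathrm dx$. For $t\ge0$, $K(t)=\{x\in K:\rho(x)\ge t\}$, assume $0<\mathrm{vol}_d(K(t))<\infty$ for $t\in(0,\|\rho\|_\infty)$, and $U_t$ is the uniform distribution on $K(t)$. For each $t$, $H_t$ is a Markov kernel on $K(t)$ (extended by $0$ outside $K(t)$, measurable in $(t,x)$), reversible with respect to $U_t$, acting by $H_tf(x)=\int f(y)H_t(x,\mathrm dy)$. $L_{2,\pi}=L_2(K,\pi)$. Let $K_\rho=\{(x,t):x\in K,\ t\in[0,\rho(x)]\}$, $\mu$ uniform on $K_\rho$, $L_{2,\mu}=L_2(K_\rho,\mu)$, $\widetilde Hf(x,s)=\int_{K(s)}f(y,s)H_s(x,\mathrm dy)$. For $k\in\mathbb N$, $H^{(k)}f(x)=\frac1{\rho(x)}\int_0^{\rho(x)}H_t^kf(x)\,\mathrm dt$ on $L_{2,\pi}$, $H=H^{(1)}$ is the hybrid slice sampler, and $S(f)=\int_Kf\,\mathrm d\pi$ as an operator onto constants. *)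

theory Defs
  imports "HOL-Probability.Probability"
begin

definition level :: "'a set \<Rightarrow> ('a \<Rightarrow> real) \<Rightarrow> real \<Rightarrow> 'a set" where
  "level K \<rho> t = {x \<in> K. \<rho> x \<ge> t}"

definition pi_meas :: "'a::euclidean_space set \<Rightarrow> ('a \<Rightarrow> real) \<Rightarrow> 'a measure" where
  "pi_meas K \<rho> = density lborel (\<lambda>x. ennreal (indicator K x * \<rho> x) /
      (\<integral>\<^sup>+ y. ennreal (indicator K y * \<rho> y) \<partial>lborel))"

definition Krho :: "'a set \<Rightarrow> ('a \<Rightarrow> real) \<Rightarrow> ('a \<times> real) set" where
  "Krho K \<rho> = {(x, t). x \<in> K \<and> 0 \<le> t \<and> t \<le> \<rho> x}"

definition mu_meas :: "'a::euclidean_space set \<Rightarrow> ('a \<Rightarrow> real) \<Rightarrow> ('a \<times> real) measure" where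
  "mu_meas K \<rho> = uniform_measure lborel (Krho K \<rho>)"

fun kpow :: "(real \<Rightarrow> 'a \<Rightarrow> 'a measure) \<Rightarrow> real \<Rightarrow> nat \<Rightarrow> ('a \<Rightarrow> real) \<Rightarrow> 'a \<Rightarrow> real" where
  "kpow H t 0 f = f"
| "kpow H t (Suc n) f = (\<lambda>x. \<integral>y. kpow H t n f y \<partial>(H t x))"

definition Hk :: "('a \<Rightarrow> real) \<Rightarrow> (real \<Rightarrow> 'a \<Rightarrow> 'a measure) \<Rightarrow> nat \<Rightarrow> ('a \<Rightarrow> real) \<Rightarrow> 'a \<Rightarrow> real" where
  "Hk \<rho> H k f x = (LINT t:{0..\<rho> x}|lborel. kpow H t k f x) / \<rho> x"

definition Htilde :: "'a set \<Rightarrow> ('a \<Rightarrow> real) \<Rightarrow> (real \<Rightarrow> 'a \<Rightarrow> 'a measure) \<Rightarrow>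
    ('a \<times> real \<Rightarrow> real) \<Rightarrow> 'a \<times> real \<Rightarrow> real" where
  "Htilde K \<rho> H f = (\<lambda>(x, s). \<integral>y. indicator (level K \<rho> s) y * f (y, s) \<partial>(H s x))"

definition L2 :: "'a measure \<Rightarrow> ('a \<Rightarrow> real) set" where
  "L2 M = {f. f \<in> borel_measurable M \<and> (\<integral>\<^sup>+ x. ennreal ((f x)\<^sup>2) \<partial>M) < \<infinity>}"

definition opnorm :: "'a measure \<Rightarrow> (('a \<Rightarrow> real) \<Rightarrow> 'a \<Rightarrow> real) \<Rightarrow> ennreal" where
  "opnorm M T = Inf {c. \<forall>f \<in> L2 M.
      (\<integral>\<^sup>+ x. ennreal ((T f x)\<^sup>2) \<partial>M) \<le> c\<^sup>2 * (\<integral>\<^sup>+ x. ennreal ((f x)\<^sup>2) \<partial>M)}"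

definition psd :: "'a measure \<Rightarrow> (('a \<Rightarrow> real) \<Rightarrow> 'a \<Rightarrow> real) \<Rightarrow> bool" where
  "psd M T \<longleftrightarrow> (\<forall>f \<in> L2 M. (\<integral>x. T f x * f x \<partial>M) \<ge> 0)"

end

theory Submission
  imports Defs
begin

(* Lift f in L2(pi) to (lift f)(x,t) = f x on K_rho; the lift is an isometry
   L2(pi) -> L2(mu) whose adjoint is the fibre average
   (fibre_avg G) x = (1/rho x) * integral of G(x,t) over t in [0, rho x].
   The operator Ht, i.e. Htilde cut off outside K_rho, is a self-adjoint contraction of
   L2(mu) (reversibility of every H_t with respect to U_t), and H^(k) = fibre_avg o Ht^k o lift.
   For y = lift f - S f the moments m n = <Ht^n y, y> are nonnegative and log-convex, by
   Cauchy-Schwarz for <_,_> and for the form <Ht _, _> (positive by hypothesis); hence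
   m 1 ^ k <= m 0 ^ (k-1) * m k, i.e. <(H-S)f, f>^k <= ||f||^(2(k-1)) <(H^(k)-S)f, f>.
   Finally Pform u v = <(H-S)u, v> is a symmetric positive form, and Cauchy-Schwarz for it
   turns the resulting bound Pform u u <= ||H^(k)-S||^(1/k) ||u||^2 into the norm bound. *)

lemma quadratic_nonneg_discriminant:
  fixes a b c :: real
  assumes q: "\<And>t. 0 \<le> a - 2*t*b + t^2*c" and c: "0 \<le> c"
  shows "b^2 \<le> a*c"
proof (cases "c = 0")
  case True
  show ?thesis
  proof (rule ccontr)
    assume "\<not> ?thesis"
    with True have b: "b \<noteq> 0" by simp
    have "0 \<le> a - 2*((\<bar>a\<bar>+1)/(2*b))*b" using q[of "(\<bar>a\<bar>+1)/(2*b)"] True by simp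
    also have "\<dots> = a - (\<bar>a\<bar> + 1)" using b by (simp add: field_simps)
    finally show False by simp
  qed
next
  case False
  with c have c: "0 < c" by simp
  have "0 \<le> a - 2*(b/c)*b + (b/c)^2*c" by (rule q)
  also have "\<dots> = a - b^2/c" using c by (simp add: field_simps power2_eq_square)
  finally have "b^2/c \<le> a" by simp
  then show ?thesis using c by (simp add: field_simps)
qed

lemma log_convex_power_bound:
  fixes m :: "nat \<Rightarrow> real"
  assumes nn: "\<And>n. 0 \<le> m n" and lc: "\<And>n. (m (Suc n))^2 \<le> m n * m (Suc (Suc n))"
  shows "m 1 ^ (Suc j) \<le> m 0 ^ j * m (Suc j)"
proof -
  have ratio: "m 1 * m j \<le> m 0 * m (Suc j)" for j
  proof (induction j)
    case 0 show ?case by simp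
  next
    case (Suc j)
    show ?case
    proof (cases "m (Suc j) = 0")
      case True then show ?thesis using nn by simp
    next
      case False
      then have pos: "0 < m (Suc j)" using nn[of "Suc j"] by simp
      have "m 1 * m (Suc j) * m (Suc j) = m 1 * (m (Suc j))^2" by (simp add: power2_eq_square)
      also have "\<dots> \<le> m 1 * (m j * m (Suc (Suc j)))" using lc[of j] nn[of 1] by (rule mult_left_mono)
      also have "\<dots> = (m 1 * m j) * m (Suc (Suc j))" by simp
      also have "\<dots> \<le> (m 0 * m (Suc j)) * m (Suc (Suc j))" using Suc nn by (intro mult_right_mono) auto
      finally have "m 1 * m (Suc j) * m (Suc j) \<le> m 0 * m (Suc (Suc j)) * m (Suc j)" by (simp add: ac_simps)
      then show ?thesis using pos by simp
    qed
  qed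
  show ?thesis
  proof (induction j)
    case 0 show ?case by simp
  next
    case (Suc j)
    have "m 1 ^ Suc (Suc j) = m 1 * m 1 ^ Suc j" by simp
    also have "\<dots> \<le> m 1 * (m 0 ^ j * m (Suc j))" using Suc nn[of 1] by (rule mult_left_mono)
    also have "\<dots> = m 0 ^ j * (m 1 * m (Suc j))" by simp
    also have "\<dots> \<le> m 0 ^ j * (m 0 * m (Suc (Suc j)))" using ratio[of "Suc j"] nn by (intro mult_left_mono) auto
    finally show ?case by (simp add: ac_simps)
  qed
qed

lemma L2_iff: "f \<in> L2 M \<longleftrightarrow> f \<in> borel_measurable M \<and> integrable M (\<lambda>x. (f x)^2)"
  unfolding L2_def by (auto simp: integrable_iff_bounded)

lemma L2_meas: "f \<in> L2 M \<Longrightarrow> f \<in> borel_measurable M"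
  by (simp add: L2_def)

lemma L2_sq: "f \<in> L2 M \<Longrightarrow> integrable M (\<lambda>x. (f x)^2)"
  by (simp add: L2_iff)

lemma L2_nn: "f \<in> L2 M \<Longrightarrow> (\<integral>\<^sup>+ x. ennreal ((f x)^2) \<partial>M) = ennreal (\<integral> x. (f x)^2 \<partial>M)"
  by (rule nn_integral_eq_integral) (auto simp: L2_sq)

text \<open>Products of square-integrable functions are integrable ($|fg| \le f^2 + g^2$).\<close>
lemma L2_mult: assumes "f \<in> L2 M" "g \<in> L2 M" shows "integrable M (\<lambda>x. f x * g x)"
proof (rule Bochner_Integration.integrable_bound)
  show "integrable M (\<lambda>x. (f x)^2 + (g x)^2)" using assms by (auto simp: L2_sq)
  show "(\<lambda>x. f x * g x) \<in> borel_measurable M" using assms by (intro borel_measurable_times) (auto simp: L2_meas)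
  show "AE x in M. norm (f x * g x) \<le> norm ((f x)^2 + (g x)^2)"
  proof (intro AE_I2)
    fix x
    have "0 \<le> (\<bar>f x\<bar> - \<bar>g x\<bar>)^2" by simp
    then have "2 * \<bar>f x\<bar> * \<bar>g x\<bar> \<le> (f x)^2 + (g x)^2" by (simp add: power2_eq_square algebra_simps)
    moreover have "0 \<le> \<bar>f x\<bar> * \<bar>g x\<bar>" by simp
    ultimately have "\<bar>f x\<bar> * \<bar>g x\<bar> \<le> (f x)^2 + (g x)^2" by linarith
    then show "norm (f x * g x) \<le> norm ((f x)^2 + (g x)^2)" by (simp add: abs_mult)
  qed
qed

lemma L2_lin: assumes "f \<in> L2 M" "g \<in> L2 M" shows "(\<lambda>x. f x + c * g x) \<in> L2 M"
proof -
  have "(\<lambda>x. (f x + c * g x)^2) = (\<lambda>x. (f x)^2 + 2 * c * (f x * g x) + c^2 * (g x)^2)"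
    by (simp add: power2_eq_square algebra_simps)
  moreover have "integrable M (\<lambda>x. (f x)^2 + 2 * c * (f x * g x) + c^2 * (g x)^2)"
    using assms L2_mult[OF assms] by (auto simp: L2_sq)
  ultimately show ?thesis using assms by (auto simp: L2_iff)
qed

lemma L2_diff: assumes "f \<in> L2 M" "g \<in> L2 M" shows "(\<lambda>x. f x - g x) \<in> L2 M"
  using L2_lin[OF assms, of "-1"] by simp

lemma L2_cmult: assumes "f \<in> L2 M" shows "(\<lambda>x. c * f x) \<in> L2 M"
proof -
  have "(\<lambda>x::'a. 0::real) \<in> L2 M" by (simp add: L2_def)
  from L2_lin[OF this assms, of c] show ?thesis by simp
qed

lemma L2_const: "finite_measure M \<Longrightarrow> (\<lambda>x. c) \<in> L2 M"
  by (simp add: L2_iff finite_measure.integrable_const)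

lemma L2_pos_part: assumes "F \<in> L2 M" shows "(\<lambda>x. max (F x) 0) \<in> L2 M"
proof -
  have [measurable]: "F \<in> borel_measurable M" using assms by (rule L2_meas)
  have "(\<integral>\<^sup>+ x. ennreal ((max (F x) 0)^2) \<partial>M) \<le> (\<integral>\<^sup>+ x. ennreal ((F x)^2) \<partial>M)"
    by (intro nn_integral_mono ennreal_leI) (auto simp: max_def)
  then show ?thesis using assms unfolding L2_def by auto
qed

lemma L2_neg_part: assumes "F \<in> L2 M" shows "(\<lambda>x. max (- F x) 0) \<in> L2 M"
  using L2_pos_part[OF L2_cmult[OF assms, of "-1"]] by simp

lemma L2_Cauchy_Schwarz: assumes f: "f \<in> L2 M" and g: "g \<in> L2 M"
  shows "(\<integral>x. f x * g x \<partial>M)^2 \<le> (\<integral>x. (f x)^2 \<partial>M) * (\<integral>x. (g x)^2 \<partial>M)"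
proof (rule quadratic_nonneg_discriminant)
  fix t :: real
  have "0 \<le> (\<integral>x. (f x - t * g x)^2 \<partial>M)" by simp
  also have "(\<integral>x. (f x - t * g x)^2 \<partial>M) = (\<integral>x. (f x)^2 + (- 2 * t) * (f x * g x) + t^2 * (g x)^2 \<partial>M)"
    by (intro Bochner_Integration.integral_cong) (auto simp: power2_eq_square algebra_simps)
  also have "\<dots> = (\<integral>x. (f x)^2 \<partial>M) - 2 * t * (\<integral>x. f x * g x \<partial>M) + t^2 * (\<integral>x. (g x)^2 \<partial>M)"
    using L2_mult[OF f g] f g by (simp add: L2_sq)
  finally show "0 \<le> (\<integral>x. (f x)^2 \<partial>M) - 2 * t * (\<integral>x. f x * g x \<partial>M) + t^2 * (\<integral>x. (g x)^2 \<partial>M)" .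
qed simp

lemma L2_Cauchy_Schwarz_sqrt: assumes f: "f \<in> L2 M" and g: "g \<in> L2 M"
  shows "(\<integral>x. f x * g x \<partial>M) \<le> sqrt (\<integral>x. (f x)^2 \<partial>M) * sqrt (\<integral>x. (g x)^2 \<partial>M)"
proof -
  have "(\<integral>x. f x * g x \<partial>M) \<le> sqrt ((\<integral>x. f x * g x \<partial>M)^2)" by simp
  also have "\<dots> \<le> sqrt ((\<integral>x. (f x)^2 \<partial>M) * (\<integral>x. (g x)^2 \<partial>M))"
    using L2_Cauchy_Schwarz[OF f g] by (rule real_sqrt_le_mono)
  finally show ?thesis by (simp add: real_sqrt_mult)
qed

lemma nn_integral_density_div:
  assumes [measurable]: "g \<in> borel_measurable M" "f \<in> borel_measurable M"
    and g: "\<And>x. 0 \<le> g x" and c: "0 < c"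
  shows "(\<integral>\<^sup>+ x. f x \<partial>density M (\<lambda>x. ennreal (g x / c))) = (\<integral>\<^sup>+ x. ennreal (g x) * f x \<partial>M) / ennreal c"
proof -
  have "(\<integral>\<^sup>+ x. f x \<partial>density M (\<lambda>x. ennreal (g x / c))) = (\<integral>\<^sup>+ x. ennreal (g x / c) * f x \<partial>M)"
    by (subst nn_integral_density) auto
  also have "\<dots> = (\<integral>\<^sup>+ x. (ennreal (g x) * f x) * (1 / ennreal c) \<partial>M)"
  proof (intro nn_integral_cong)
    fix x
    have inv_c: "ennreal (1 / c) = 1 / ennreal c" using divide_ennreal[of 1 c] c by simp
    have "ennreal (g x / c) = ennreal (g x) * (1 / ennreal c)"
      using g[of x] c by (simp add: ennreal_mult[symmetric] inv_c[symmetric])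
    then show "ennreal (g x / c) * f x = (ennreal (g x) * f x) * (1 / ennreal c)"
      by (simp add: ac_simps)
  qed
  also have "\<dots> = (\<integral>\<^sup>+ x. ennreal (g x) * f x \<partial>M) * (1 / ennreal c)"
    by (rule nn_integral_multc) auto
  finally show ?thesis by (simp add: ennreal_times_divide)
qed

lemma interval_integral_sq_le:
  fixes g :: "real \<Rightarrow> real"
  assumes [measurable]: "g \<in> borel_measurable borel" and r: "0 \<le> r"
  shows "ennreal ((\<integral> t. indicator {0..r} t * g t \<partial>lborel)^2)
    \<le> ennreal r * (\<integral>\<^sup>+ t. indicator {0..r} t * ennreal ((g t)^2) \<partial>lborel)"
proof (cases "integrable lborel (\<lambda>t. indicator {0..r} t * g t)")
  case False then show ?thesis by (simp add: not_integrable_integral_eq)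
next
  case int: True
  let ?I = "\<lambda>t. indicator {0..r} t :: ennreal"
  have "ennreal ((\<integral> t. indicator {0..r} t * g t \<partial>lborel)^2) = (ennreal \<bar>\<integral> t. indicator {0..r} t * g t \<partial>lborel\<bar>)^2"
    by (subst ennreal_power) auto
  also have "\<dots> \<le> (\<integral>\<^sup>+ t. ennreal \<bar>indicator {0..r} t * g t\<bar> \<partial>lborel)^2"
    using integral_norm_bound_ennreal[OF int] by (intro power_mono) auto
  also have "\<dots> = (\<integral>\<^sup>+ t. ennreal \<bar>indicator {0..r} t * g t\<bar> * ?I t \<partial>lborel)^2"
    by (intro arg_cong[where f="\<lambda>a. a^2"] nn_integral_cong) (auto simp: indicator_def)
  also have "\<dots> \<le> (\<integral>\<^sup>+ t. (ennreal \<bar>indicator {0..r} t * g t\<bar>)^2 \<partial>lborel) * (\<integral>\<^sup>+ t. (?I t)^2 \<partial>lborel)"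
    by (rule Cauchy_Schwarz_nn_integral) measurable
  also have "(\<integral>\<^sup>+ t. (ennreal \<bar>indicator {0..r} t * g t\<bar>)^2 \<partial>lborel)
      = (\<integral>\<^sup>+ t. indicator {0..r} t * ennreal ((g t)^2) \<partial>lborel)"
    by (intro nn_integral_cong) (auto simp: indicator_def ennreal_power)
  also have "(\<integral>\<^sup>+ t. (?I t)^2 \<partial>lborel) = ennreal r"
  proof -
    have "(\<lambda>t. (?I t)^2) = ?I" by (auto simp: indicator_def)
    then show ?thesis using r by simp
  qed
  finally show ?thesis by (simp add: mult.commute)
qed

lemma opnorm_bound_real:
  assumes A_L2: "\<And>f. f \<in> L2 M \<Longrightarrow> A f \<in> L2 M" and b: "0 \<le> b"
  shows "(\<forall>f \<in> L2 M. (\<integral>\<^sup>+ x. ennreal ((A f x)\<^sup>2) \<partial>M) \<le> (ennreal b)\<^sup>2 * (\<integral>\<^sup>+ x. ennreal ((f x)\<^sup>2) \<partial>M))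
     \<longleftrightarrow> (\<forall>f \<in> L2 M. (\<integral> x. (A f x)^2 \<partial>M) \<le> b^2 * (\<integral> x. (f x)^2 \<partial>M))"
proof -
  have "(\<integral>\<^sup>+ x. ennreal ((A f x)\<^sup>2) \<partial>M) \<le> (ennreal b)\<^sup>2 * (\<integral>\<^sup>+ x. ennreal ((f x)\<^sup>2) \<partial>M)
      \<longleftrightarrow> (\<integral> x. (A f x)^2 \<partial>M) \<le> b^2 * (\<integral> x. (f x)^2 \<partial>M)" if f: "f \<in> L2 M" for f
  proof -
    have "0 \<le> b^2 * (\<integral> x. (f x)^2 \<partial>M)" by simp
    then show ?thesis using L2_nn[OF A_L2[OF f]] L2_nn[OF f] b
      by (simp add: ennreal_mult[symmetric] ennreal_power)
  qed
  then show ?thesis by blast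
qed

lemma opnorm_power_le:
  assumes k: "1 \<le> k"
    and A_L2: "\<And>f. f \<in> L2 M \<Longrightarrow> A f \<in> L2 M" and B_L2: "\<And>f. f \<in> L2 M \<Longrightarrow> B f \<in> L2 M"
    and transfer: "\<And>b. 0 \<le> b \<Longrightarrow> \<forall>g \<in> L2 M. (\<integral> x. (B g x)^2 \<partial>M) \<le> b^2 * (\<integral> x. (g x)^2 \<partial>M) \<Longrightarrow>
        \<forall>f \<in> L2 M. (\<integral> x. (A f x)^2 \<partial>M) \<le> (root k b)^2 * (\<integral> x. (f x)^2 \<partial>M)"
  shows "opnorm M A ^ k \<le> opnorm M B"
  unfolding opnorm_def[of M B]
proof (rule Inf_greatest)
  fix c assume c: "c \<in> {c. \<forall>f \<in> L2 M. (\<integral>\<^sup>+ x. ennreal ((B f x)\<^sup>2) \<partial>M) \<le> c\<^sup>2 * (\<integral>\<^sup>+ x. ennreal ((f x)\<^sup>2) \<partial>M)}"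
  show "opnorm M A ^ k \<le> c"
  proof (cases c)
    case top then show ?thesis by simp
  next
    case (real b)
    then have c_eq: "c = ennreal b" and b: "0 \<le> b" by auto
    have root_b: "0 \<le> root k b" using b by (simp add: real_root_ge_zero)
    have "\<forall>g \<in> L2 M. (\<integral> x. (B g x)^2 \<partial>M) \<le> b^2 * (\<integral> x. (g x)^2 \<partial>M)"
      using c opnorm_bound_real[OF B_L2 b] by (simp add: c_eq)
    then have "\<forall>f \<in> L2 M. (\<integral>\<^sup>+ x. ennreal ((A f x)\<^sup>2) \<partial>M) \<le> (ennreal (root k b))\<^sup>2 * (\<integral>\<^sup>+ x. ennreal ((f x)\<^sup>2) \<partial>M)"
      using transfer[OF b] opnorm_bound_real[OF A_L2 root_b] by simp
    then have "opnorm M A \<le> ennreal (root k b)"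
      unfolding opnorm_def by (intro Inf_lower) simp
    then have "opnorm M A ^ k \<le> ennreal (root k b) ^ k"
      by (rule power_mono) simp
    also have "\<dots> = c" using b k root_b by (simp add: c_eq ennreal_power)
    finally show ?thesis .
  qed
qed

section \<open>The slice-sampler setting\<close>

locale slice_kernel =
  fixes K :: "'a::euclidean_space set" and \<rho> :: "'a \<Rightarrow> real"
    and H :: "real \<Rightarrow> 'a \<Rightarrow> 'a measure"
  assumes K_borel[measurable]: "K \<in> sets borel"
    and rho_meas[measurable]: "\<rho> \<in> borel_measurable borel"
    and rho_nonneg: "\<forall>x\<in>K. 0 \<le> \<rho> x"
    and rho_int_pos: "0 < (\<integral>\<^sup>+ x. ennreal (indicator K x * \<rho> x) \<partial>lborel)"
    and rho_int_fin: "(\<integral>\<^sup>+ x. ennreal (indicator K x * \<rho> x) \<partial>lborel) < \<infinity>"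
    and H_markov: "\<forall>t\<ge>0. \<forall>x \<in> level K \<rho> t.
        prob_space (H t x) \<and> sets (H t x) = sets borel \<and> emeasure (H t x) (level K \<rho> t) = 1"
    and H_zero: "\<forall>t\<ge>0. \<forall>x. x \<notin> level K \<rho> t \<longrightarrow> H t x = null_measure borel"
    and H_meas: "(\<lambda>(t, x). H t x) \<in> measurable (restrict_space borel {0..} \<Otimes>\<^sub>M borel) (subprob_algebra borel)"
    and H_rev: "\<forall>t\<ge>0. 0 < emeasure lborel (level K \<rho> t) \<and> emeasure lborel (level K \<rho> t) < \<infinity> \<longrightarrow>
        (\<forall>A \<in> sets borel. \<forall>B \<in> sets borel. A \<subseteq> level K \<rho> t \<longrightarrow> B \<subseteq> level K \<rho> t \<longrightarrow>
          (\<integral>\<^sup>+ x. indicator A x * emeasure (H t x) B \<partial>uniform_measure lborel (level K \<rho> t)) =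
          (\<integral>\<^sup>+ x. indicator B x * emeasure (H t x) A \<partial>uniform_measure lborel (level K \<rho> t)))"
begin

abbreviation "L \<equiv> level K \<rho>"
abbreviation "KR \<equiv> Krho K \<rho>"

text \<open>H is only specified for levels t \<ge> 0.  Extending it by Hext s = H (max s 0) gives a
  kernel jointly measurable on all of (s, x), which is what the product-measure arguments need.\<close>
definition Hext :: "real \<Rightarrow> 'a \<Rightarrow> 'a measure" where "Hext s x = H (max s 0) x"

lemma Hext_pos: "0 \<le> s \<Longrightarrow> Hext s x = H s x" by (simp add: Hext_def)

lemma ind_L: "indicator (L s) y = (if y \<in> K \<and> s \<le> \<rho> y then 1 else (0::real))"
  by (auto simp: level_def indicator_def)

lemma L_sets[measurable]: "L s \<in> sets borel"
proof -
  have "L s = {y \<in> space borel. y \<in> K \<and> s \<le> \<rho> y}" by (auto simp: level_def)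
  also have "\<dots> \<in> sets borel" by measurable
  finally show ?thesis .
qed

lemma ind_L_comp[measurable (raw)]:
  "f \<in> M \<rightarrow>\<^sub>M borel \<Longrightarrow> g \<in> M \<rightarrow>\<^sub>M borel \<Longrightarrow> (\<lambda>x. indicator (L (g x)) (f x) :: real) \<in> borel_measurable M"
proof -
  assume [measurable]: "f \<in> M \<rightarrow>\<^sub>M borel" "g \<in> M \<rightarrow>\<^sub>M borel"
  show ?thesis unfolding ind_L by measurable
qed

lemma ind_L_comp_ennreal[measurable (raw)]:
  "f \<in> M \<rightarrow>\<^sub>M borel \<Longrightarrow> g \<in> M \<rightarrow>\<^sub>M borel \<Longrightarrow> (\<lambda>x. indicator (L (g x)) (f x) :: ennreal) \<in> borel_measurable M"
proof -
  assume [measurable]: "f \<in> M \<rightarrow>\<^sub>M borel" "g \<in> M \<rightarrow>\<^sub>M borel"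
  have "(\<lambda>x. indicator (L (g x)) (f x) :: ennreal) = (\<lambda>x. ennreal (indicator (L (g x)) (f x)))"
    by (auto simp: indicator_def)
  also have "\<dots> \<in> borel_measurable M" by measurable
  finally show ?thesis .
qed

lemma KR_sets_pair[measurable]: "KR \<in> sets (borel \<Otimes>\<^sub>M borel :: ('a \<times> real) measure)"
proof -
  have "KR = {p \<in> space (borel \<Otimes>\<^sub>M borel). fst p \<in> K \<and> 0 \<le> snd p \<and> snd p \<le> \<rho> (fst p)}" by (auto simp: Krho_def space_pair_measure)
  also have "\<dots> \<in> sets (borel \<Otimes>\<^sub>M borel)" by measurable
  finally show ?thesis .
qed

lemma KR_sets[measurable]: "KR \<in> sets (borel :: ('a \<times> real) measure)"
  by (subst borel_prod[symmetric]) (rule KR_sets_pair)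

lemma Hext_meas[measurable]: "(\<lambda>p. Hext (snd p) (fst p)) \<in> measurable (borel \<Otimes>\<^sub>M borel :: ('a \<times> real) measure) (subprob_algebra borel)"
proof -
  have m: "(\<lambda>p::'a\<times>real. (max (snd p) 0, fst p)) \<in> measurable (borel \<Otimes>\<^sub>M borel) (restrict_space borel {0..} \<Otimes>\<^sub>M borel)"
  proof (intro measurable_Pair measurable_restrict_space2)
    show "(\<lambda>p::'a\<times>real. max (snd p) 0) \<in> borel \<Otimes>\<^sub>M borel \<rightarrow>\<^sub>M borel" by measurable
  qed auto
  have "(\<lambda>p. Hext (snd p) (fst p)) = (\<lambda>(t, x). H t x) \<circ> (\<lambda>p::'a\<times>real. (max (snd p) 0, fst p))"
    by (auto simp: Hext_def)
  then show ?thesis using measurable_comp[OF m H_meas] by simp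
qed

lemma sets_Hext: "sets (Hext s x) = sets borel"
  using H_markov H_zero unfolding Hext_def
  by (cases "x \<in> L (max s 0)") auto

lemma Hext_kernel[measurable]: "(\<lambda>x. Hext s x) \<in> measurable borel (subprob_algebra borel)"
proof -
  have "(\<lambda>x::'a. (x, s)) \<in> measurable borel (borel \<Otimes>\<^sub>M borel)" by measurable
  from measurable_comp[OF this Hext_meas] show ?thesis by (simp add: comp_def)
qed

section \<open>Symmetry of a single level\<close>

text \<open>For a level s, level_int s f x integrates f over the level set against Hext s x, and
  level_pairing s f g is the (unnormalised) pairing of f and level_int s g on the level set;
  both act on nonnegative functions, where no integrability issues arise.\<close>
definition level_int :: "real \<Rightarrow> ('a \<Rightarrow> ennreal) \<Rightarrow> 'a \<Rightarrow> ennreal" where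
  "level_int s f x = (\<integral>\<^sup>+ y. indicator (L s) y * f y \<partial>Hext s x)"

definition level_pairing :: "real \<Rightarrow> ('a \<Rightarrow> ennreal) \<Rightarrow> ('a \<Rightarrow> ennreal) \<Rightarrow> ennreal" where
  "level_pairing s f g = (\<integral>\<^sup>+ x. indicator (L s) x * f x * level_int s g x \<partial>lborel)"

lemma meas_Hext[measurable (raw)]: "f \<in> borel_measurable borel \<Longrightarrow> f \<in> borel_measurable (Hext s x)"
  by (simp add: sets_Hext cong: measurable_cong_sets)

lemma level_int_meas[measurable]: "f \<in> borel_measurable borel \<Longrightarrow> level_int s f \<in> borel_measurable borel"
proof -
  assume [measurable]: "f \<in> borel_measurable borel"
  have "(\<lambda>M. integral\<^sup>N M (\<lambda>y. indicator (L s) y * f y)) \<in> borel_measurable (subprob_algebra borel)"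
    by (rule nn_integral_measurable_subprob_algebra) measurable
  from measurable_comp[OF Hext_kernel this] show ?thesis
    unfolding level_int_def[abs_def] comp_def .
qed

lemma level_int_cmult: "f \<in> borel_measurable borel \<Longrightarrow> level_int s (\<lambda>y. c * f y) x = c * level_int s f x"
  unfolding level_int_def by (subst nn_integral_cmult[symmetric]) (auto simp: ac_simps)

lemma level_int_add: "f \<in> borel_measurable borel \<Longrightarrow> g \<in> borel_measurable borel \<Longrightarrow> level_int s (\<lambda>y. f y + g y) x = level_int s f x + level_int s g x"
  unfolding level_int_def by (subst nn_integral_add[symmetric]) (auto simp: distrib_left)

lemma level_int_SUP: "(\<And>i. Fs i \<in> borel_measurable borel) \<Longrightarrow> incseq Fs \<Longrightarrow> level_int s (SUP i. Fs i) x = (SUP i. level_int s (Fs i) x)"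
  unfolding level_int_def
  by (subst nn_integral_monotone_convergence_SUP[symmetric])
    (auto simp: incseq_def le_fun_def SUP_mult_left_ennreal SUP_apply image_comp intro!: mult_left_mono)

lemma level_int_mono: "incseq Fs \<Longrightarrow> incseq (\<lambda>i. level_int s (Fs i) x)"
  unfolding level_int_def incseq_def le_fun_def by (auto intro!: nn_integral_mono mult_left_mono)

text \<open>Markov's inequality: positive levels have finite volume since rho is integrable.\<close>
lemma vol_fin: assumes "0 < s" shows "emeasure lborel (L s) < \<infinity>"
proof -
  have "ennreal s * emeasure lborel (L s) = (\<integral>\<^sup>+ x. ennreal s * indicator (L s) x \<partial>lborel)"
    by (simp add: nn_integral_cmult_indicator)
  also have "\<dots> \<le> (\<integral>\<^sup>+ x. ennreal (indicator K x * \<rho> x) \<partial>lborel)"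
    by (intro nn_integral_mono) (auto simp: level_def indicator_def intro: ennreal_leI)
  also have "\<dots> < \<infinity>" by (rule rho_int_fin)
  finally have "ennreal s * emeasure lborel (L s) < \<infinity>" .
  with assms show ?thesis
    by (auto simp: ennreal_mult_less_top)
qed

lemma level_int_indicator:
  assumes [measurable]: "C \<in> sets borel"
  shows "level_int s (indicator C) x = emeasure (Hext s x) (C \<inter> L s)"
proof -
  have "level_int s (indicator C) x = (\<integral>\<^sup>+ y. indicator (C \<inter> L s) y \<partial>Hext s x)"
    unfolding level_int_def by (intro nn_integral_cong) (auto simp: indicator_def)
  also have "\<dots> = emeasure (Hext s x) (C \<inter> L s)"
    by (rule nn_integral_indicator) (simp add: sets_Hext)
  finally show ?thesis .
qed

lemma level_pairing_indicator_uniform: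
  assumes s: "0 < s" and v0: "emeasure lborel (L s) \<noteq> 0"
    and [measurable]: "C \<in> sets borel" "D \<in> sets borel"
  shows "level_pairing s (indicator C) (indicator D) = emeasure lborel (L s) *
      (\<integral>\<^sup>+ x. indicator (C \<inter> L s) x * emeasure (H s x) (D \<inter> L s) \<partial>uniform_measure lborel (L s))"
proof -
  define v where "v = emeasure lborel (L s)"
  have vt: "v \<noteq> \<top>" using vol_fin[OF s] by (auto simp: v_def)
  have [measurable]: "(\<lambda>x. emeasure (Hext s x) C) \<in> borel_measurable borel" if [measurable]: "C \<in> sets borel" for C
    using measurable_comp[OF Hext_kernel measurable_emeasure_subprob_algebra[OF that]] by (simp add: comp_def)
  define g where "g x = indicator (C \<inter> L s) x * emeasure (Hext s x) (D \<inter> L s)" for x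
  have [measurable]: "g \<in> borel_measurable borel" unfolding g_def by measurable
  have "level_pairing s (indicator C) (indicator D) = (\<integral>\<^sup>+ x. g x \<partial>lborel)"
    unfolding level_pairing_def g_def by (intro nn_integral_cong) (auto simp: level_int_indicator indicator_def)
  also have "\<dots> = (\<integral>\<^sup>+ x. g x * indicator (L s) x \<partial>lborel) / v * v"
  proof -
    have "(\<integral>\<^sup>+ x. g x * indicator (L s) x \<partial>lborel) = (\<integral>\<^sup>+ x. g x \<partial>lborel)"
      by (intro nn_integral_cong) (auto simp: g_def indicator_def)
    then show ?thesis using v0 vt by (simp add: ennreal_divide_times less_top v_def)
  qed
  also have "(\<integral>\<^sup>+ x. g x * indicator (L s) x \<partial>lborel) / v = (\<integral>\<^sup>+ x. g x \<partial>uniform_measure lborel (L s))"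
    unfolding v_def by (subst nn_integral_uniform_measure) auto
  finally show ?thesis using s by (simp add: g_def v_def Hext_pos mult.commute)
qed

lemma level_pairing_ind:
  assumes s: "0 < s" and A[measurable]: "A \<in> sets borel" and B[measurable]: "B \<in> sets borel"
  shows "level_pairing s (indicator A) (indicator B) = level_pairing s (indicator B) (indicator A)"
proof (cases "emeasure lborel (L s) = 0")
  case True
  then have ae: "AE x in lborel. x \<notin> L s"
    by (intro AE_I[of _ _ "L s"]) auto
  have "level_pairing s f g = 0" for f g
    unfolding level_pairing_def using ae by (subst nn_integral_cong_AE[where v="\<lambda>_. 0"]) auto
  then show ?thesis by simp
next
  case False
  then have "0 < emeasure lborel (L s) \<and> emeasure lborel (L s) < \<infinity>"
    using vol_fin[OF s] by (auto simp: zero_less_iff_neq_zero)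
  with H_rev s have "(\<integral>\<^sup>+ x. indicator (A \<inter> L s) x * emeasure (H s x) (B \<inter> L s) \<partial>uniform_measure lborel (L s)) =
      (\<integral>\<^sup>+ x. indicator (B \<inter> L s) x * emeasure (H s x) (A \<inter> L s) \<partial>uniform_measure lborel (L s))"
    by auto
  then show ?thesis using level_pairing_indicator_uniform[OF s False] by simp
qed

lemma level_pairing_cmult1: "u \<in> borel_measurable borel \<Longrightarrow> g \<in> borel_measurable borel \<Longrightarrow> level_pairing s (\<lambda>x. c * u x) g = c * level_pairing s u g"
  unfolding level_pairing_def by (subst nn_integral_cmult[symmetric]) (auto simp: ac_simps)

lemma level_pairing_cmult2: "u \<in> borel_measurable borel \<Longrightarrow> f \<in> borel_measurable borel \<Longrightarrow> level_pairing s f (\<lambda>x. c * u x) = c * level_pairing s f u"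
  unfolding level_pairing_def by (subst nn_integral_cmult[symmetric]) (auto simp: ac_simps level_int_cmult)

lemma level_pairing_add1: "u \<in> borel_measurable borel \<Longrightarrow> v \<in> borel_measurable borel \<Longrightarrow> g \<in> borel_measurable borel \<Longrightarrow>
    level_pairing s (\<lambda>x. v x + u x) g = level_pairing s v g + level_pairing s u g"
  unfolding level_pairing_def by (subst nn_integral_add[symmetric]) (auto simp: algebra_simps)

lemma level_pairing_add2: "u \<in> borel_measurable borel \<Longrightarrow> v \<in> borel_measurable borel \<Longrightarrow> f \<in> borel_measurable borel \<Longrightarrow>
    level_pairing s f (\<lambda>x. v x + u x) = level_pairing s f v + level_pairing s f u"
  unfolding level_pairing_def by (subst nn_integral_add[symmetric]) (auto simp: algebra_simps level_int_add)

lemma level_pairing_SUP1: "(\<And>i. Fs i \<in> borel_measurable borel) \<Longrightarrow> incseq Fs \<Longrightarrow> g \<in> borel_measurable borel \<Longrightarrow>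
    level_pairing s (SUP i. Fs i) g = (SUP i. level_pairing s (Fs i) g)"
  unfolding level_pairing_def
  by (subst nn_integral_monotone_convergence_SUP[symmetric])
    (auto simp: incseq_def le_fun_def SUP_mult_left_ennreal SUP_mult_right_ennreal SUP_apply image_comp
      intro!: mult_left_mono mult_right_mono)

lemma level_pairing_SUP2:
  assumes Fs: "\<And>i. Fs i \<in> borel_measurable borel" and inc: "incseq Fs" and f: "f \<in> borel_measurable borel"
  shows "level_pairing s f (SUP i. Fs i) = (SUP i. level_pairing s f (Fs i))"
proof -
  have "level_pairing s f (SUP i. Fs i) = (\<integral>\<^sup>+ x. (SUP i. indicator (L s) x * f x * level_int s (Fs i) x) \<partial>lborel)"
    unfolding level_pairing_def using Fs inc by (simp add: level_int_SUP SUP_mult_left_ennreal)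
  also have "\<dots> = (SUP i. level_pairing s f (Fs i))"
    unfolding level_pairing_def using level_int_mono[OF inc, of s] Fs f
    by (subst nn_integral_monotone_convergence_SUP[symmetric])
      (auto simp: incseq_def le_fun_def intro!: mult_left_mono)
  finally show ?thesis .
qed

lemma level_pairing_sym_indicator:
  assumes s: "0 < s" and f: "f \<in> borel_measurable borel" and B: "B \<in> sets borel"
  shows "level_pairing s f (indicator B) = level_pairing s (indicator B) f"
  using f
proof induct
  case (cong f g) then show ?case by (metis ext space_borel UNIV_I)
next
  case (set A) then show ?case using level_pairing_ind[OF s _ B] by simp
next
  case (mult u c) then show ?case using B by (simp add: level_pairing_cmult1 level_pairing_cmult2)
next
  case (add u v) then show ?case using B by (simp add: level_pairing_add1 level_pairing_add2)
next
  case (seq Fs)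
  have "level_pairing s (SUP i. Fs i) (indicator B) = (SUP i. level_pairing s (Fs i) (indicator B))"
    using B seq by (intro level_pairing_SUP1) auto
  also have "\<dots> = (SUP i. level_pairing s (indicator B) (Fs i))" using seq(3) by simp
  also have "\<dots> = level_pairing s (indicator B) (SUP i. Fs i)"
    using B seq by (intro level_pairing_SUP2[symmetric]) auto
  finally show ?case .
qed

lemma level_pairing_sym:
  assumes s: "0 < s" and f: "f \<in> borel_measurable borel" and g: "g \<in> borel_measurable borel"
  shows "level_pairing s f g = level_pairing s g f"
  using g f
proof (induct arbitrary: f)
  case (cong h g) then show ?case by (metis ext space_borel UNIV_I)
next
  case (set A) then show ?case using level_pairing_sym_indicator[OF s] by simp
next
  case (mult u c) then show ?case by (simp add: level_pairing_cmult1 level_pairing_cmult2)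
next
  case (add u v) then show ?case by (simp add: level_pairing_add1 level_pairing_add2)
next
  case (seq Fs)
  have "level_pairing s f (SUP i. Fs i) = (SUP i. level_pairing s f (Fs i))"
    using seq by (intro level_pairing_SUP2) auto
  also have "\<dots> = (SUP i. level_pairing s (Fs i) f)" using seq by simp
  also have "\<dots> = level_pairing s (SUP i. Fs i) f"
    using seq by (intro level_pairing_SUP1[symmetric]) auto
  finally show ?case .
qed

lemma ind_KR: "indicator KR (x, s) = (indicator (L s) x :: 'b::{zero_neq_one})" if "0 \<le> s"
  using that by (auto simp: Krho_def level_def indicator_def)

definition Ht_nn :: "('a \<times> real \<Rightarrow> ennreal) \<Rightarrow> 'a \<times> real \<Rightarrow> ennreal" where
  "Ht_nn F p = (\<integral>\<^sup>+ y. indicator (L (snd p)) y * F (y, snd p) \<partial>Hext (snd p) (fst p))"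

abbreviation "LL \<equiv> (lborel \<Otimes>\<^sub>M lborel :: ('a \<times> real) measure)"

lemma Ht_nn_meas[measurable]:
  assumes [measurable]: "F \<in> borel_measurable (borel \<Otimes>\<^sub>M borel)"
  shows "Ht_nn F \<in> borel_measurable (borel \<Otimes>\<^sub>M borel)"
proof -
  have "(\<lambda>p. integral\<^sup>N (Hext (snd p) (fst p)) (\<lambda>y. indicator (L (snd p)) y * F (y, snd p)))
     \<in> borel_measurable (borel \<Otimes>\<^sub>M borel)"
    by (rule nn_integral_measurable_subprob_algebra2[where N=borel]) measurable
  then show ?thesis unfolding Ht_nn_def[abs_def] .
qed

lemma Ht_nn_level_int: "Ht_nn F (x, s) = level_int s (\<lambda>y. F (y, s)) x"
  by (simp add: Ht_nn_def level_int_def)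

lemma LL_meas: "f \<in> borel_measurable (borel \<Otimes>\<^sub>M borel) \<Longrightarrow> f \<in> borel_measurable LL"
  by (simp cong: measurable_cong_sets add: sets_pair_measure_cong[OF sets_lborel sets_lborel])

text \<open>Symmetry of the lifted kernel with respect to Lebesgue measure on K_rho: integrate
  level by level (Tonelli) and use the symmetry of each positive level.\<close>
lemma Ht_nn_symmetric:
  assumes F[measurable]: "F \<in> borel_measurable (borel \<Otimes>\<^sub>M borel)"
    and G[measurable]: "G \<in> borel_measurable (borel \<Otimes>\<^sub>M borel)"
  shows "(\<integral>\<^sup>+ p. indicator KR p * F p * Ht_nn G p \<partial>LL) = (\<integral>\<^sup>+ p. indicator KR p * G p * Ht_nn F p \<partial>LL)"
proof -
  have eq: "(\<integral>\<^sup>+ p. indicator KR p * F p * Ht_nn G p \<partial>LL) =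
      (\<integral>\<^sup>+ s. \<integral>\<^sup>+ x. indicator KR (x, s) * F (x, s) * Ht_nn G (x, s) \<partial>lborel \<partial>lborel)"
    if [measurable]: "F \<in> borel_measurable (borel \<Otimes>\<^sub>M borel)" "G \<in> borel_measurable (borel \<Otimes>\<^sub>M borel)" for F G
  proof -
    have "(\<lambda>p. indicator KR p * F p * Ht_nn G p) \<in> borel_measurable (borel \<Otimes>\<^sub>M borel)" by measurable
    then show ?thesis by (subst lborel_pair.nn_integral_snd[symmetric]) (auto intro: LL_meas)
  qed
  have pt: "(\<integral>\<^sup>+ x. indicator KR (x, s) * F (x, s) * Ht_nn G (x, s) \<partial>lborel) =
      (\<integral>\<^sup>+ x. indicator KR (x, s) * G (x, s) * Ht_nn F (x, s) \<partial>lborel)" if "s \<noteq> 0" for s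
  proof (cases "s < 0")
    case True then show ?thesis by (simp add: Krho_def indicator_def)
  next
    case False
    with that have s: "0 < s" by simp
    have [measurable]: "(\<lambda>x. F (x, s)) \<in> borel_measurable borel" "(\<lambda>x. G (x, s)) \<in> borel_measurable borel"
      by measurable
    show ?thesis
      using level_pairing_sym[OF s, of "\<lambda>x. F (x, s)" "\<lambda>x. G (x, s)"] s
      by (simp add: level_pairing_def ind_KR Ht_nn_level_int)
  qed
  show ?thesis
    unfolding eq[OF F G] eq[OF G F]
    by (rule nn_integral_cong_AE, rule eventually_mono[OF AE_lborel_singleton[of 0]]) (rule pt)
qed

definition Z :: real where "Z = enn2real (\<integral>\<^sup>+ x. ennreal (indicator K x * \<rho> x) \<partial>lborel)"

lemma Z_eq: "(\<integral>\<^sup>+ x. ennreal (indicator K x * \<rho> x) \<partial>lborel) = ennreal Z"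
  using rho_int_fin by (simp add: Z_def less_top)

lemma Z_pos: "0 < Z"
  using rho_int_pos rho_int_fin by (simp add: Z_def enn2real_positive_iff)

lemma KR_fibre: "(\<integral>\<^sup>+ t. indicator KR (x, t) * c \<partial>lborel) = ennreal (indicator K x * \<rho> x) * c"
proof (cases "x \<in> K")
  case True
  then have "(\<lambda>t. indicator KR (x, t) * c) = (\<lambda>t. c * indicator {0..\<rho> x} t)"
    by (auto simp: Krho_def indicator_def)
  then show ?thesis using True rho_nonneg by (simp add: nn_integral_cmult_indicator mult.commute)
next
  case False then show ?thesis by (simp add: Krho_def indicator_def)
qed

lemma emeasure_KR: "emeasure LL KR = ennreal Z"
proof -
  have "emeasure LL KR = (\<integral>\<^sup>+ p. indicator KR p \<partial>LL)"
    by (simp add: sets_pair_measure_cong[OF sets_lborel sets_lborel])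
  also have "\<dots> = (\<integral>\<^sup>+ x. \<integral>\<^sup>+ t. indicator KR (x, t) \<partial>lborel \<partial>lborel)"
    by (subst lborel.nn_integral_fst[symmetric]) (auto intro!: LL_meas)
  also have "\<dots> = (\<integral>\<^sup>+ x. ennreal (indicator K x * \<rho> x) \<partial>lborel)"
    using KR_fibre[where c=1] by simp
  finally show ?thesis by (simp add: Z_eq)
qed

abbreviation "\<mu> \<equiv> mu_meas K \<rho>"
abbreviation "\<pi> \<equiv> pi_meas K \<rho>"

lemma mu_eq: "\<mu> = density LL (\<lambda>p. ennreal (indicator KR p / Z))"
proof -
  have "\<mu> = uniform_measure LL KR" by (simp add: mu_meas_def lborel_prod)
  also have "\<dots> = density LL (\<lambda>p. ennreal (indicator KR p / Z))"
    unfolding uniform_measure_def emeasure_KR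
    using divide_ennreal[of 1 Z] Z_pos by (intro density_cong) (auto simp: indicator_def intro!: AE_I2)
  finally show ?thesis .
qed

lemma sets_mu: "sets \<mu> = sets (borel \<Otimes>\<^sub>M borel)"
  by (simp add: mu_eq sets_pair_measure_cong[OF sets_lborel sets_lborel])

lemma meas_mu_iff: "f \<in> borel_measurable \<mu> \<longleftrightarrow> f \<in> borel_measurable (borel \<Otimes>\<^sub>M borel)"
  by (simp add: sets_mu cong: measurable_cong_sets)

lemma prob_mu: "prob_space \<mu>"
  unfolding mu_meas_def lborel_prod[symmetric]
  by (rule prob_space_uniform_measure) (use emeasure_KR Z_pos in auto)

lemma nn_mu: "f \<in> borel_measurable (borel \<Otimes>\<^sub>M borel) \<Longrightarrow>
    (\<integral>\<^sup>+ p. f p \<partial>\<mu>) = (\<integral>\<^sup>+ p. indicator KR p * f p \<partial>LL) / ennreal Z"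
  unfolding mu_eq using Z_pos by (subst nn_integral_density_div) (auto intro: LL_meas simp: ennreal_indicator)

lemma int_mu: "(\<integral> p. f p \<partial>\<mu>) = (\<integral> p. indicator KR p / Z * f p \<partial>LL)"
  if "f \<in> borel_measurable (borel \<Otimes>\<^sub>M borel)"
  unfolding mu_eq using that Z_pos
  by (subst integral_density) (auto intro: LL_meas)

lemma AE_mu_KR: "AE p in \<mu>. p \<in> KR"
proof -
  have "(\<integral>\<^sup>+ p. indicator (- KR) p \<partial>\<mu>) = 0"
  proof -
    have "(\<lambda>p. indicator KR p * indicator (- KR) p :: ennreal) = (\<lambda>_. 0)" by (auto simp: indicator_def)
    then show ?thesis by (subst nn_mu) auto
  qed
  then have "AE p in \<mu>. indicator (- KR) p = (0::ennreal)"
    by (subst (asm) nn_integral_0_iff_AE) (auto simp: meas_mu_iff)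
  then show ?thesis by (auto simp: indicator_def)
qed

lemma ind_rho_nn: "0 \<le> indicator K x * \<rho> x"
  using rho_nonneg by (auto simp: indicator_def)

lemma pi_eq: "\<pi> = density lborel (\<lambda>x. ennreal (indicator K x * \<rho> x / Z))"
  unfolding pi_meas_def Z_eq
  by (intro density_cong) (auto intro!: AE_I2 simp: divide_ennreal Z_pos ind_rho_nn)

lemma sets_pi: "sets \<pi> = sets borel" by (simp add: pi_eq)
lemma meas_pi_iff: "f \<in> borel_measurable \<pi> \<longleftrightarrow> f \<in> borel_measurable borel"
  by (simp add: sets_pi cong: measurable_cong_sets)

lemma nn_pi: "f \<in> borel_measurable borel \<Longrightarrow>
    (\<integral>\<^sup>+ x. f x \<partial>\<pi>) = (\<integral>\<^sup>+ x. ennreal (indicator K x * \<rho> x) * f x \<partial>lborel) / ennreal Z"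
  unfolding pi_eq using Z_pos ind_rho_nn by (subst nn_integral_density_div) auto

lemma int_pi: "f \<in> borel_measurable borel \<Longrightarrow> (\<integral> x. f x \<partial>\<pi>) = (\<integral> x. indicator K x * \<rho> x / Z * f x \<partial>lborel)"
  unfolding pi_eq using ind_rho_nn Z_pos by (subst integral_density) auto

lemma mu_fst_nn:
  assumes h[measurable]: "h \<in> borel_measurable borel"
  shows "(\<integral>\<^sup>+ p. h (fst p) \<partial>\<mu>) = (\<integral>\<^sup>+ x. h x \<partial>\<pi>)"
proof -
  have "(\<integral>\<^sup>+ p. indicator KR p * h (fst p) \<partial>LL) = (\<integral>\<^sup>+ x. \<integral>\<^sup>+ t. indicator KR (x, t) * h x \<partial>lborel \<partial>lborel)"
    by (subst lborel.nn_integral_fst[symmetric]) (auto intro!: LL_meas)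
  also have "\<dots> = (\<integral>\<^sup>+ x. ennreal (indicator K x * \<rho> x) * h x \<partial>lborel)"
    by (simp only: KR_fibre)
  finally show ?thesis by (simp add: nn_mu nn_pi)
qed

lemma distr_fst: "distr \<mu> borel fst = \<pi>"
proof (rule measure_eqI)
  show "sets (distr \<mu> borel fst) = sets \<pi>" by (simp add: sets_pi)
  fix A assume "A \<in> sets (distr \<mu> borel fst)"
  then have A[measurable]: "A \<in> sets borel" by simp
  have fm: "fst \<in> \<mu> \<rightarrow>\<^sub>M borel" by (simp add: meas_mu_iff)
  have "emeasure (distr \<mu> borel fst) A = (\<integral>\<^sup>+ x. indicator A x \<partial>distr \<mu> borel fst)" by simp
  also have "\<dots> = (\<integral>\<^sup>+ p. indicator A (fst p) \<partial>\<mu>)" by (subst nn_integral_distr[OF fm]) auto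
  also have "\<dots> = (\<integral>\<^sup>+ x. indicator A x \<partial>\<pi>)" by (rule mu_fst_nn) auto
  also have "\<dots> = emeasure \<pi> A" by (simp add: sets_pi)
  finally show "emeasure (distr \<mu> borel fst) A = emeasure \<pi> A" .
qed

lemma prob_pi: "prob_space \<pi>"
proof -
  interpret prob_space \<mu> by (rule prob_mu)
  have "prob_space (distr \<mu> borel fst)" by (rule prob_space_distr) (simp add: meas_mu_iff)
  then show ?thesis by (simp add: distr_fst)
qed

lemma mu_fst_int:
  fixes h :: "'a \<Rightarrow> real"
  assumes h[measurable]: "h \<in> borel_measurable borel"
  shows "(\<integral> p. h (fst p) \<partial>\<mu>) = (\<integral> x. h x \<partial>\<pi>)"
proof -
  have fm: "fst \<in> \<mu> \<rightarrow>\<^sub>M borel" by (simp add: meas_mu_iff)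
  have "(\<integral> x. h x \<partial>\<pi>) = (\<integral> x. h x \<partial>distr \<mu> borel fst)" by (simp add: distr_fst)
  also have "\<dots> = (\<integral> p. h (fst p) \<partial>\<mu>)" by (rule integral_distr[OF fm h])
  finally show ?thesis by simp
qed

section \<open>The lifted operator on L2(mu)\<close>

lemma Hext_prob: "p \<in> KR \<Longrightarrow> prob_space (Hext (snd p) (fst p))"
  using H_markov by (cases p) (auto simp: Krho_def level_def Hext_pos)

lemma Hext_L: "p \<in> KR \<Longrightarrow> emeasure (Hext (snd p) (fst p)) (L (snd p)) = 1"
  using H_markov by (cases p) (auto simp: Krho_def level_def Hext_pos)

lemma Ht_nn_one: "p \<in> KR \<Longrightarrow> Ht_nn (\<lambda>_. 1) p = 1"
  unfolding Ht_nn_def using Hext_L[of p] by (simp add: sets_Hext)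

text \<open>mu is invariant for the lifted kernel (symmetry tested against the constant 1).\<close>
lemma Ht_nn_invariant:
  assumes G[measurable]: "G \<in> borel_measurable (borel \<Otimes>\<^sub>M borel)"
  shows "(\<integral>\<^sup>+ p. Ht_nn G p \<partial>\<mu>) = (\<integral>\<^sup>+ p. G p \<partial>\<mu>)"
proof -
  have "(\<integral>\<^sup>+ p. indicator KR p * Ht_nn G p \<partial>LL) = (\<integral>\<^sup>+ p. indicator KR p * (\<lambda>_. 1) p * Ht_nn G p \<partial>LL)" by simp
  also have "\<dots> = (\<integral>\<^sup>+ p. indicator KR p * G p * Ht_nn (\<lambda>_. 1) p \<partial>LL)"
    by (rule Ht_nn_symmetric) auto
  also have "\<dots> = (\<integral>\<^sup>+ p. indicator KR p * G p \<partial>LL)"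
    by (intro nn_integral_cong) (auto simp: indicator_def Ht_nn_one)
  finally show ?thesis by (simp add: nn_mu)
qed

definition Ht :: "('a \<times> real \<Rightarrow> real) \<Rightarrow> 'a \<times> real \<Rightarrow> real" where
  "Ht F p = indicator KR p * (\<integral> y. indicator (L (snd p)) y * F (y, snd p) \<partial>Hext (snd p) (fst p))"

lemma Ht_meas[measurable]:
  assumes [measurable]: "F \<in> borel_measurable (borel \<Otimes>\<^sub>M borel)"
  shows "Ht F \<in> borel_measurable (borel \<Otimes>\<^sub>M borel)"
proof -
  note integral_measurable_subprob_algebra[measurable] measurable_distr2[measurable]
  define g where "g = (\<lambda>(p::'a\<times>real, y::'a). indicator (L (snd p)) y * F (y, snd p))"
  have [measurable]: "g \<in> borel_measurable ((borel \<Otimes>\<^sub>M borel) \<Otimes>\<^sub>M borel)"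
    unfolding g_def by measurable
  have "(\<lambda>p. integral\<^sup>L (distr (Hext (snd p) (fst p)) ((borel \<Otimes>\<^sub>M borel) \<Otimes>\<^sub>M borel) (\<lambda>y. (p, y))) g)
      \<in> borel_measurable (borel \<Otimes>\<^sub>M borel)"
    by measurable
  moreover have "integral\<^sup>L (distr (Hext (snd p) (fst p)) ((borel \<Otimes>\<^sub>M borel) \<Otimes>\<^sub>M borel) (\<lambda>y. (p, y))) g =
      (\<integral> y. indicator (L (snd p)) y * F (y, snd p) \<partial>Hext (snd p) (fst p))" for p
    by (subst integral_distr) (auto simp: g_def sets_Hext space_pair_measure intro!: measurable_Pair2' cong: measurable_cong_sets)
  ultimately have "(\<lambda>p. (\<integral> y. indicator (L (snd p)) y * F (y, snd p) \<partial>Hext (snd p) (fst p))) \<in> borel_measurable (borel \<Otimes>\<^sub>M borel)"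
    by simp
  then show ?thesis unfolding Ht_def[abs_def] by measurable
qed

lemma L2_mu_meas: "F \<in> L2 \<mu> \<Longrightarrow> F \<in> borel_measurable (borel \<Otimes>\<^sub>M borel)"
  by (simp add: L2_def meas_mu_iff)

lemma L2_mu_iff: "F \<in> L2 \<mu> \<longleftrightarrow> F \<in> borel_measurable (borel \<Otimes>\<^sub>M borel) \<and> (\<integral>\<^sup>+ p. ennreal ((F p)^2) \<partial>\<mu>) < \<infinity>"
  by (simp add: L2_def meas_mu_iff)

lemma sq_indicator_mult: "ennreal ((indicator A y * f y)^2) = indicator A y * ennreal ((f y)^2)"
  by (auto simp: indicator_def)

text \<open>For F in L2(mu), the integral defining Ht F p exists for mu-almost every p, since the
  lifted kernel applied to F squared has finite integral by invariance.\<close>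
lemma Ht_AE_int:
  assumes F: "F \<in> L2 \<mu>"
  shows "AE p in \<mu>. integrable (Hext (snd p) (fst p)) (\<lambda>y. indicator (L (snd p)) y * F (y, snd p))"
proof -
  have [measurable]: "F \<in> borel_measurable (borel \<Otimes>\<^sub>M borel)" using F by (rule L2_mu_meas)
  define G where "G = (\<lambda>q. ennreal ((F q)^2))"
  have [measurable]: "G \<in> borel_measurable (borel \<Otimes>\<^sub>M borel)" unfolding G_def by measurable
  have "(\<integral>\<^sup>+ p. Ht_nn G p \<partial>\<mu>) = (\<integral>\<^sup>+ p. G p \<partial>\<mu>)" by (rule Ht_nn_invariant) measurable
  also have "\<dots> < \<infinity>" using F by (simp add: L2_mu_iff G_def)
  finally have "AE p in \<mu>. Ht_nn G p \<noteq> \<infinity>"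
    by (intro nn_integral_PInf_AE) (auto simp: meas_mu_iff)
  with AE_mu_KR show ?thesis
  proof eventually_elim
    case (elim p)
    interpret N: prob_space "Hext (snd p) (fst p)" using Hext_prob[OF elim(1)] .
    define g where "g = (\<lambda>y. indicator (L (snd p)) y * F (y, snd p))"
    have [measurable]: "g \<in> borel_measurable (Hext (snd p) (fst p))"
      unfolding g_def by (simp add: sets_Hext cong: measurable_cong_sets)
    have "(\<integral>\<^sup>+ y. ennreal ((g y)^2) \<partial>Hext (snd p) (fst p)) = Ht_nn G p"
      unfolding Ht_nn_def G_def g_def by (rule nn_integral_cong, rule sq_indicator_mult)
    then have "integrable (Hext (snd p) (fst p)) (\<lambda>y. (g y)^2)"
      using elim(2) by (simp add: integrable_iff_bounded less_top)
    then have "integrable (Hext (snd p) (fst p)) g"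
      by (rule N.square_integrable_imp_integrable[rotated]) measurable
    then show ?case unfolding g_def .
  qed
qed

text \<open>Jensen (Cauchy--Schwarz) inequality for the probability measures Hext s x.\<close>
lemma Ht_sq:
  assumes F[measurable]: "F \<in> borel_measurable (borel \<Otimes>\<^sub>M borel)"
  shows "ennreal ((Ht F p)^2) \<le> Ht_nn (\<lambda>q. ennreal ((F q)^2)) p"
proof (cases "p \<in> KR")
  case False then show ?thesis by (simp add: Ht_def)
next
  case True
  interpret N: prob_space "Hext (snd p) (fst p)" using Hext_prob[OF True] .
  define g where "g = (\<lambda>y. indicator (L (snd p)) y * F (y, snd p))"
  have [measurable]: "g \<in> borel_measurable (Hext (snd p) (fst p))"
    unfolding g_def by (simp add: sets_Hext cong: measurable_cong_sets)
  have Tg: "Ht F p = (\<integral>y. g y \<partial>Hext (snd p) (fst p))" using True by (simp add: Ht_def g_def)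
  have rhs: "Ht_nn (\<lambda>q. ennreal ((F q)^2)) p = (\<integral>\<^sup>+ y. ennreal ((g y)^2) \<partial>Hext (snd p) (fst p))"
    unfolding Ht_nn_def g_def by (rule nn_integral_cong, rule sq_indicator_mult[symmetric])
  show ?thesis
  proof (cases "integrable (Hext (snd p) (fst p)) g")
    case False then show ?thesis by (simp add: Tg not_integrable_integral_eq)
  next
    case int: True
    have "ennreal ((Ht F p)^2) = (ennreal \<bar>Ht F p\<bar>)^2"
      by (subst ennreal_power) auto
    also have "\<dots> \<le> (\<integral>\<^sup>+ y. ennreal \<bar>g y\<bar> \<partial>Hext (snd p) (fst p))^2"
      using integral_norm_bound_ennreal[OF int] unfolding Tg by (intro power_mono) auto
    also have "\<dots> = (\<integral>\<^sup>+ y. ennreal \<bar>g y\<bar> * 1 \<partial>Hext (snd p) (fst p))^2" by simp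
    also have "\<dots> \<le> (\<integral>\<^sup>+ y. (ennreal \<bar>g y\<bar>)^2 \<partial>Hext (snd p) (fst p)) * (\<integral>\<^sup>+ y. 1 ^ 2 \<partial>Hext (snd p) (fst p))"
      by (rule Cauchy_Schwarz_nn_integral) measurable
    also have "\<dots> = (\<integral>\<^sup>+ y. ennreal ((g y)^2) \<partial>Hext (snd p) (fst p))"
    proof -
      have "(ennreal \<bar>g y\<bar>)^2 = ennreal ((g y)^2)" for y by (subst ennreal_power) auto
      then show ?thesis by (simp add: N.emeasure_space_1)
    qed
    finally show ?thesis by (simp add: rhs)
  qed
qed

lemma Ht_L2:
  assumes F: "F \<in> L2 \<mu>"
  shows "Ht F \<in> L2 \<mu>" and "(\<integral>\<^sup>+ p. ennreal ((Ht F p)^2) \<partial>\<mu>) \<le> (\<integral>\<^sup>+ p. ennreal ((F p)^2) \<partial>\<mu>)"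
proof -
  have [measurable]: "F \<in> borel_measurable (borel \<Otimes>\<^sub>M borel)" using F by (rule L2_mu_meas)
  have "(\<integral>\<^sup>+ p. ennreal ((Ht F p)^2) \<partial>\<mu>) \<le> (\<integral>\<^sup>+ p. Ht_nn (\<lambda>q. ennreal ((F q)^2)) p \<partial>\<mu>)"
    by (intro nn_integral_mono Ht_sq) measurable
  also have "\<dots> = (\<integral>\<^sup>+ p. ennreal ((F p)^2) \<partial>\<mu>)" by (rule Ht_nn_invariant) measurable
  finally show le: "(\<integral>\<^sup>+ p. ennreal ((Ht F p)^2) \<partial>\<mu>) \<le> (\<integral>\<^sup>+ p. ennreal ((F p)^2) \<partial>\<mu>)" .
  show "Ht F \<in> L2 \<mu>"
    using le F by (auto simp: L2_mu_iff)
qed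

text \<open>Ht is linear up to mu-null sets (the defining integrals exist only almost everywhere).\<close>
lemma Ht_lin:
  assumes F: "F \<in> L2 \<mu>" and G: "G \<in> L2 \<mu>"
  shows "AE p in \<mu>. Ht (\<lambda>q. F q + c * G q) p = Ht F p + c * Ht G p"
  using Ht_AE_int[OF F] Ht_AE_int[OF G]
proof eventually_elim
  case (elim p)
  have "(\<integral> y. indicator (L (snd p)) y * (F (y, snd p) + c * G (y, snd p)) \<partial>Hext (snd p) (fst p)) =
     (\<integral> y. indicator (L (snd p)) y * F (y, snd p) + c * (indicator (L (snd p)) y * G (y, snd p)) \<partial>Hext (snd p) (fst p))"
    by (simp add: algebra_simps)
  also have "\<dots> = (\<integral> y. indicator (L (snd p)) y * F (y, snd p) \<partial>Hext (snd p) (fst p)) +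
      c * (\<integral> y. indicator (L (snd p)) y * G (y, snd p) \<partial>Hext (snd p) (fst p))"
    using elim by simp
  finally show ?case by (simp add: Ht_def algebra_simps)
qed

lemma Ht_KR: "Ht (indicator KR) p = indicator KR p"
proof (cases "p \<in> KR")
  case False then show ?thesis by (simp add: Ht_def)
next
  case True
  interpret N: prob_space "Hext (snd p) (fst p)" using Hext_prob[OF True] .
  from True have s: "0 \<le> snd p" by (auto simp: Krho_def)
  have "(\<integral> y. indicator (L (snd p)) y * indicator KR (y, snd p) \<partial>Hext (snd p) (fst p)) =
      (\<integral> y. indicator (L (snd p)) y \<partial>Hext (snd p) (fst p) :: real)"
  proof -
    have "indicator (L (snd p)) y * indicator KR (y, snd p) = (indicator (L (snd p)) y :: real)" for y
      using s by (auto simp: Krho_def level_def indicator_def)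
    then have eq: "(\<lambda>y. indicator (L (snd p)) y * indicator KR (y, snd p)) = (indicator (L (snd p)) :: _ \<Rightarrow> real)"
      by (intro ext)
    show ?thesis unfolding eq ..
  qed
  also have "\<dots> = measure (Hext (snd p) (fst p)) (L (snd p))"
    by (simp add: sets_Hext)
  also have "\<dots> = 1" using Hext_L[OF True] by (simp add: measure_def)
  finally show ?thesis using True by (simp add: Ht_def)
qed

lemma Ht_zero: "p \<notin> KR \<Longrightarrow> Ht F p = 0"
  by (simp add: Ht_def)

lemma Ht_nonneg: "(\<And>q. 0 \<le> F q) \<Longrightarrow> 0 \<le> Ht F p"
  unfolding Ht_def by (auto intro!: mult_nonneg_nonneg integral_nonneg_AE AE_I2)

lemma Ht_ennreal:
  assumes F: "F \<in> L2 \<mu>" and nn: "\<And>q. 0 \<le> F q"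
  shows "AE p in \<mu>. ennreal (Ht F p) = Ht_nn (\<lambda>q. ennreal (F q)) p"
  using Ht_AE_int[OF F] AE_mu_KR
proof eventually_elim
  case (elim p)
  have "ennreal (Ht F p) = ennreal (\<integral> y. indicator (L (snd p)) y * F (y, snd p) \<partial>Hext (snd p) (fst p))"
    using elim(2) by (simp add: Ht_def)
  also have "\<dots> = (\<integral>\<^sup>+ y. ennreal (indicator (L (snd p)) y * F (y, snd p)) \<partial>Hext (snd p) (fst p))"
    using elim(1) nn by (intro nn_integral_eq_integral[symmetric]) auto
  also have "\<dots> = Ht_nn (\<lambda>q. ennreal (F q)) p"
    unfolding Ht_nn_def by (intro nn_integral_cong) (auto simp: indicator_def)
  finally show ?case .
qed

text \<open>Self-adjointness of Ht, first for nonnegative functions (where it is the symmetry of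
  the lifted kernel), then for all of L2(mu) by splitting into positive and negative parts.\<close>
lemma Ht_sym_nonneg:
  assumes F: "F \<in> L2 \<mu>" and G: "G \<in> L2 \<mu>" and Fn: "\<And>q. 0 \<le> F q" and Gn: "\<And>q. 0 \<le> G q"
  shows "(\<integral> p. Ht F p * G p \<partial>\<mu>) = (\<integral> p. F p * Ht G p \<partial>\<mu>)"
proof -
  have [measurable]: "F \<in> borel_measurable (borel \<Otimes>\<^sub>M borel)" "G \<in> borel_measurable (borel \<Otimes>\<^sub>M borel)"
    using F G by (auto intro: L2_mu_meas)
  have key: "(\<integral> p. Ht F p * G p \<partial>\<mu>) = enn2real ((\<integral>\<^sup>+ p. indicator KR p * (\<lambda>q. ennreal (G q)) p * Ht_nn (\<lambda>q. ennreal (F q)) p \<partial>LL) / ennreal Z)"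
    if F: "F \<in> L2 \<mu>" and G: "G \<in> L2 \<mu>" and Fn: "\<And>q. 0 \<le> F q" and Gn: "\<And>q. 0 \<le> G q" for F G
  proof -
    have [measurable]: "F \<in> borel_measurable (borel \<Otimes>\<^sub>M borel)" "G \<in> borel_measurable (borel \<Otimes>\<^sub>M borel)"
      using F G by (auto intro: L2_mu_meas)
    have "(\<integral> p. Ht F p * G p \<partial>\<mu>) = enn2real (\<integral>\<^sup>+ p. ennreal (Ht F p * G p) \<partial>\<mu>)"
      using Fn Gn by (intro integral_eq_nn_integral) (auto simp: meas_mu_iff intro!: Ht_nonneg AE_I2 mult_nonneg_nonneg)
    also have "(\<integral>\<^sup>+ p. ennreal (Ht F p * G p) \<partial>\<mu>) = (\<integral>\<^sup>+ p. ennreal (G p) * Ht_nn (\<lambda>q. ennreal (F q)) p \<partial>\<mu>)"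
      using Ht_ennreal[OF F Fn]
    proof (intro nn_integral_cong_AE, eventually_elim)
      case (elim p)
      then show ?case using Fn Gn by (simp add: ennreal_mult' Ht_nonneg mult.commute)
    qed
    also have "\<dots> = (\<integral>\<^sup>+ p. indicator KR p * (\<lambda>q. ennreal (G q)) p * Ht_nn (\<lambda>q. ennreal (F q)) p \<partial>LL) / ennreal Z"
      by (subst nn_mu) (auto simp: ac_simps)
    finally show ?thesis .
  qed
  show ?thesis
    using key[OF F G Fn Gn] key[OF G F Gn Fn] Ht_nn_symmetric[of "\<lambda>q. ennreal (G q)" "\<lambda>q. ennreal (F q)"]
    by (simp add: mult.commute)
qed

lemma Ht_split:
  assumes G: "G \<in> L2 \<mu>"
  shows "AE p in \<mu>. Ht G p = Ht (\<lambda>q. max (G q) 0) p - Ht (\<lambda>q. max (- G q) 0) p"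
proof -
  have e: "(\<lambda>q. max (G q) 0 + (-1) * max (- G q) 0) = G" by (rule ext) (auto simp: max_def)
  show ?thesis using Ht_lin[OF L2_pos_part[OF G] L2_neg_part[OF G], of "-1"] unfolding e by simp
qed

lemma int_cong_mu:
  assumes "AE p in \<mu>. f p = g p" "f \<in> borel_measurable (borel \<Otimes>\<^sub>M borel)" "g \<in> borel_measurable (borel \<Otimes>\<^sub>M borel)"
  shows "(\<integral> p. f p \<partial>\<mu>) = (\<integral> p. g p \<partial>\<mu>)"
  using assms by (intro integral_cong_AE) (auto simp: meas_mu_iff)

lemma Ht_sym1:
  assumes F: "F \<in> L2 \<mu>" and G: "G \<in> L2 \<mu>" and Fn: "\<And>q. 0 \<le> F q"
  shows "(\<integral> p. Ht F p * G p \<partial>\<mu>) = (\<integral> p. F p * Ht G p \<partial>\<mu>)"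
proof -
  define Gp where "Gp = (\<lambda>q. max (G q) 0)"
  define Gn where "Gn = (\<lambda>q. max (- G q) 0)"
  have Gp: "Gp \<in> L2 \<mu>" and Gn: "Gn \<in> L2 \<mu>" using L2_pos_part[OF G] L2_neg_part[OF G] by (simp_all add: Gp_def Gn_def)
  have [measurable]: "F \<in> borel_measurable (borel \<Otimes>\<^sub>M borel)" "Gp \<in> borel_measurable (borel \<Otimes>\<^sub>M borel)"
    "Gn \<in> borel_measurable (borel \<Otimes>\<^sub>M borel)" "G \<in> borel_measurable (borel \<Otimes>\<^sub>M borel)"
    using F Gp Gn G by (auto intro: L2_mu_meas)
  have TF: "Ht F \<in> L2 \<mu>" using Ht_L2[OF F] by simp
  have "(\<integral> p. Ht F p * G p \<partial>\<mu>) = (\<integral> p. Ht F p * Gp p - Ht F p * Gn p \<partial>\<mu>)"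
    by (intro Bochner_Integration.integral_cong) (auto simp: Gp_def Gn_def max_def algebra_simps)
  also have "\<dots> = (\<integral> p. Ht F p * Gp p \<partial>\<mu>) - (\<integral> p. Ht F p * Gn p \<partial>\<mu>)"
    using L2_mult[OF TF Gp] L2_mult[OF TF Gn] by simp
  also have "\<dots> = (\<integral> p. F p * Ht Gp p \<partial>\<mu>) - (\<integral> p. F p * Ht Gn p \<partial>\<mu>)"
    using Ht_sym_nonneg[OF F Gp Fn] Ht_sym_nonneg[OF F Gn Fn] by (simp add: Gp_def Gn_def)
  also have "\<dots> = (\<integral> p. F p * Ht Gp p - F p * Ht Gn p \<partial>\<mu>)"
    using L2_mult[OF F Ht_L2(1)[OF Gp]] L2_mult[OF F Ht_L2(1)[OF Gn]] by simp
  also have "\<dots> = (\<integral> p. F p * Ht G p \<partial>\<mu>)"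
  proof (intro int_cong_mu)
    show "AE p in \<mu>. F p * Ht Gp p - F p * Ht Gn p = F p * Ht G p"
      using Ht_split[OF G] by eventually_elim (simp add: Gp_def Gn_def right_diff_distrib)
  qed auto
  finally show ?thesis .
qed

lemma Ht_sym:
  assumes F: "F \<in> L2 \<mu>" and G: "G \<in> L2 \<mu>"
  shows "(\<integral> p. Ht F p * G p \<partial>\<mu>) = (\<integral> p. F p * Ht G p \<partial>\<mu>)"
proof -
  define Fp where "Fp = (\<lambda>q. max (F q) 0)"
  define Fn where "Fn = (\<lambda>q. max (- F q) 0)"
  have Fp: "Fp \<in> L2 \<mu>" and Fn: "Fn \<in> L2 \<mu>" using L2_pos_part[OF F] L2_neg_part[OF F] by (simp_all add: Fp_def Fn_def)
  have [measurable]: "F \<in> borel_measurable (borel \<Otimes>\<^sub>M borel)" "Fp \<in> borel_measurable (borel \<Otimes>\<^sub>M borel)"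
    "Fn \<in> borel_measurable (borel \<Otimes>\<^sub>M borel)" "G \<in> borel_measurable (borel \<Otimes>\<^sub>M borel)"
    using F Fp Fn G by (auto intro: L2_mu_meas)
  have TG: "Ht G \<in> L2 \<mu>" using Ht_L2[OF G] by simp
  have "(\<integral> p. Ht F p * G p \<partial>\<mu>) = (\<integral> p. Ht Fp p * G p - Ht Fn p * G p \<partial>\<mu>)"
  proof (intro int_cong_mu)
    show "AE p in \<mu>. Ht F p * G p = Ht Fp p * G p - Ht Fn p * G p"
      using Ht_split[OF F] by eventually_elim (simp add: Fp_def Fn_def left_diff_distrib)
  qed auto
  also have "\<dots> = (\<integral> p. Ht Fp p * G p \<partial>\<mu>) - (\<integral> p. Ht Fn p * G p \<partial>\<mu>)"
    using L2_mult[OF Ht_L2(1)[OF Fp] G] L2_mult[OF Ht_L2(1)[OF Fn] G] by simp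
  also have "\<dots> = (\<integral> p. Fp p * Ht G p \<partial>\<mu>) - (\<integral> p. Fn p * Ht G p \<partial>\<mu>)"
    using Ht_sym1[OF Fp G] Ht_sym1[OF Fn G] by (simp add: Fp_def Fn_def)
  also have "\<dots> = (\<integral> p. Fp p * Ht G p - Fn p * Ht G p \<partial>\<mu>)"
    using L2_mult[OF Fp TG] L2_mult[OF Fn TG] by simp
  also have "\<dots> = (\<integral> p. F p * Ht G p \<partial>\<mu>)"
    by (intro Bochner_Integration.integral_cong) (auto simp: Fp_def Fn_def max_def algebra_simps)
  finally show ?thesis .
qed

section \<open>Lift and fibre average\<close>

definition lift :: "('a \<Rightarrow> real) \<Rightarrow> 'a \<times> real \<Rightarrow> real" where
  "lift f p = indicator KR p * f (fst p)"

lemma lift_meas[measurable]: "f \<in> borel_measurable borel \<Longrightarrow> lift f \<in> borel_measurable (borel \<Otimes>\<^sub>M borel)"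
proof -
  assume [measurable]: "f \<in> borel_measurable borel"
  show ?thesis unfolding lift_def[abs_def] by measurable
qed

lemma lift_AE: "AE p in \<mu>. lift f p = f (fst p)"
  using AE_mu_KR by eventually_elim (simp add: lift_def)

lemma L2_pi_meas: "f \<in> L2 \<pi> \<Longrightarrow> f \<in> borel_measurable borel"
  by (simp add: L2_def meas_pi_iff)

lemma lift_L2: assumes f: "f \<in> L2 \<pi>" shows "lift f \<in> L2 \<mu>"
proof -
  have [measurable]: "f \<in> borel_measurable borel" using f by (rule L2_pi_meas)
  have "(\<integral>\<^sup>+ p. ennreal ((lift f p)^2) \<partial>\<mu>) = (\<integral>\<^sup>+ p. ennreal ((f (fst p))^2) \<partial>\<mu>)"
    using lift_AE[of f] by (intro nn_integral_cong_AE) (auto elim!: eventually_mono)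
  also have "\<dots> = (\<integral>\<^sup>+ x. ennreal ((f x)^2) \<partial>\<pi>)" by (rule mu_fst_nn) measurable
  also have "\<dots> < \<infinity>" using f by (simp add: L2_def)
  finally show ?thesis by (simp add: L2_mu_iff)
qed

lemma lift_inner: assumes f: "f \<in> L2 \<pi>" and h: "h \<in> L2 \<pi>"
  shows "(\<integral> p. lift f p * lift h p \<partial>\<mu>) = (\<integral> x. f x * h x \<partial>\<pi>)"
proof -
  have [measurable]: "f \<in> borel_measurable borel" "h \<in> borel_measurable borel" using f h by (auto intro: L2_pi_meas)
  have "(\<integral> p. lift f p * lift h p \<partial>\<mu>) = (\<integral> p. f (fst p) * h (fst p) \<partial>\<mu>)"
  proof (intro int_cong_mu)
    show "AE p in \<mu>. lift f p * lift h p = f (fst p) * h (fst p)"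
      using lift_AE[of f] lift_AE[of h] by eventually_elim simp
  qed auto
  also have "\<dots> = (\<integral> x. f x * h x \<partial>\<pi>)" by (rule mu_fst_int) measurable
  finally show ?thesis .
qed

lemma lift_one: "lift (\<lambda>_. 1) = indicator KR"
  by (simp add: lift_def[abs_def])

definition fibre_avg :: "('a \<times> real \<Rightarrow> real) \<Rightarrow> 'a \<Rightarrow> real" where
  "fibre_avg G x = (LINT t:{0..\<rho> x}|lborel. G (x, t)) / \<rho> x"

lemma fibre_avg_alt: "fibre_avg G x = (\<integral> t. indicator {0..\<rho> x} t * G (x, t) \<partial>lborel) / \<rho> x"
  by (simp add: fibre_avg_def set_lebesgue_integral_def)

lemma fibre_avg_meas[measurable]:
  assumes G[measurable]: "G \<in> borel_measurable (borel \<Otimes>\<^sub>M borel)"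
  shows "fibre_avg G \<in> borel_measurable borel"
proof -
  have "(\<lambda>(x, t). indicator {0..\<rho> x} t * G (x, t)) \<in> borel_measurable (borel \<Otimes>\<^sub>M borel)"
  proof -
    have "(\<lambda>(x, t). indicator {0..\<rho> x} t * G (x, t)) = (\<lambda>p. (if 0 \<le> snd p \<and> snd p \<le> \<rho> (fst p) then 1 else 0) * G p)"
      by (auto simp: indicator_def)
    also have "\<dots> \<in> borel_measurable (borel \<Otimes>\<^sub>M borel)" by measurable
    finally show ?thesis .
  qed
  then have "(\<lambda>(x, t). indicator {0..\<rho> x} t * G (x, t)) \<in> borel_measurable (borel \<Otimes>\<^sub>M lborel)"
    by (simp cong: measurable_cong_sets add: sets_pair_measure_cong[OF refl sets_lborel])
  then have "(\<lambda>x. \<integral> t. indicator {0..\<rho> x} t * G (x, t) \<partial>lborel) \<in> borel_measurable borel"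
    by (rule lborel.borel_measurable_lebesgue_integral)
  then show ?thesis unfolding fibre_avg_alt[abs_def] by measurable
qed

lemma integral_degenerate_interval: "(\<integral> t. indicator {0..0::real} t * g t \<partial>lborel) = (0::real)"
proof -
  have "(\<lambda>t. indicator {0..0::real} t * g t) = (\<lambda>t. g 0 * indicator {0} t)"
    by (auto simp: indicator_def)
  then show ?thesis by simp
qed

lemma fibre_avg_pt:
  assumes G[measurable]: "G \<in> borel_measurable (borel \<Otimes>\<^sub>M borel)"
  shows "ennreal (indicator K x * \<rho> x) * ennreal ((fibre_avg G x)^2) \<le> (\<integral>\<^sup>+ t. indicator KR (x, t) * ennreal ((G (x, t))^2) \<partial>lborel)"
proof (cases "x \<in> K \<and> 0 < \<rho> x")
  case False
  then have "indicator K x * \<rho> x = 0" using rho_nonneg by (auto simp: indicator_def)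
  then have "ennreal (indicator K x * \<rho> x) = 0" by (simp only: ennreal_0)
  then show ?thesis by simp
next
  case True
  define r where "r = \<rho> x"
  have r: "0 < r" using True by (simp add: r_def)
  have [measurable]: "(\<lambda>t. G (x, t)) \<in> borel_measurable borel" by measurable
  have indKR: "indicator KR (x, t) = (indicator {0..r} t :: 'b::zero_neq_one)" for t
    using True by (auto simp: Krho_def r_def indicator_def)
  define Lx where "Lx = (\<integral> t. indicator {0..r} t * G (x, t) \<partial>lborel)"
  define J where "J = (\<integral>\<^sup>+ t. indicator {0..r} t * ennreal ((G (x, t))^2) \<partial>lborel)"
  have avgx: "fibre_avg G x = Lx / r" by (simp add: fibre_avg_alt Lx_def r_def)
  have rhs: "(\<integral>\<^sup>+ t. indicator KR (x, t) * ennreal ((G (x, t))^2) \<partial>lborel) = J"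
    by (simp add: J_def indKR)
  have main: "ennreal (Lx^2) \<le> ennreal r * J"
    unfolding Lx_def J_def using r by (intro interval_integral_sq_le) auto
  have "ennreal (indicator K x * \<rho> x) * ennreal ((fibre_avg G x)^2) = ennreal (Lx^2 / r)"
    using True r by (simp add: avgx r_def ennreal_mult[symmetric] power2_eq_square)
  also have "\<dots> \<le> J"
  proof (cases "J = \<infinity>")
    case True then show ?thesis by simp
  next
    case False
    then obtain j where j: "J = ennreal j" "0 \<le> j" by (cases J) auto
    have "Lx^2 \<le> r * j" using main j r by (simp add: ennreal_mult[symmetric])
    then have "Lx^2 / r \<le> j" using r by (simp add: field_simps)
    then show ?thesis using j by (simp add: ennreal_leI)
  qed
  finally show ?thesis by (simp add: rhs)
qed

lemma fibre_avg_L2: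
  assumes G: "G \<in> L2 \<mu>"
  shows "fibre_avg G \<in> L2 \<pi>" "(\<integral>\<^sup>+ x. ennreal ((fibre_avg G x)^2) \<partial>\<pi>) \<le> (\<integral>\<^sup>+ p. ennreal ((G p)^2) \<partial>\<mu>)"
proof -
  have [measurable]: "G \<in> borel_measurable (borel \<Otimes>\<^sub>M borel)" using G by (rule L2_mu_meas)
  have "(\<integral>\<^sup>+ x. ennreal ((fibre_avg G x)^2) \<partial>\<pi>) = (\<integral>\<^sup>+ x. ennreal (indicator K x * \<rho> x) * ennreal ((fibre_avg G x)^2) \<partial>lborel) / ennreal Z"
    by (rule nn_pi) measurable
  also have "\<dots> \<le> (\<integral>\<^sup>+ x. \<integral>\<^sup>+ t. indicator KR (x, t) * ennreal ((G (x, t))^2) \<partial>lborel \<partial>lborel) / ennreal Z"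
    by (intro divide_right_mono_ennreal nn_integral_mono fibre_avg_pt) measurable
  also have "(\<integral>\<^sup>+ x. \<integral>\<^sup>+ t. indicator KR (x, t) * ennreal ((G (x, t))^2) \<partial>lborel \<partial>lborel)
      = (\<integral>\<^sup>+ p. indicator KR p * ennreal ((G p)^2) \<partial>LL)"
    by (subst lborel.nn_integral_fst[symmetric]) (auto intro!: LL_meas)
  also have "\<dots> / ennreal Z = (\<integral>\<^sup>+ p. ennreal ((G p)^2) \<partial>\<mu>)"
    by (subst nn_mu) auto
  finally show le: "(\<integral>\<^sup>+ x. ennreal ((fibre_avg G x)^2) \<partial>\<pi>) \<le> (\<integral>\<^sup>+ p. ennreal ((G p)^2) \<partial>\<mu>)" .
  show "fibre_avg G \<in> L2 \<pi>"
    using le G unfolding L2_def by (auto simp: meas_pi_iff L2_mu_iff)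
qed

lemma fibre_avg_inner:
  assumes G: "G \<in> L2 \<mu>" and h: "h \<in> L2 \<pi>"
  shows "(\<integral> x. fibre_avg G x * h x \<partial>\<pi>) = (\<integral> p. G p * lift h p \<partial>\<mu>)"
proof -
  have [measurable]: "G \<in> borel_measurable (borel \<Otimes>\<^sub>M borel)" "h \<in> borel_measurable borel"
    using G h by (auto intro: L2_mu_meas L2_pi_meas)
  have int: "integrable \<mu> (\<lambda>p. G p * lift h p)" using L2_mult[OF G lift_L2[OF h]] .
  have intLL: "integrable LL (\<lambda>p. indicator KR p / Z * (G p * lift h p))"
    using int unfolding mu_eq using Z_pos
    by (subst (asm) integrable_density) (auto intro: LL_meas)
  have "(\<integral> p. G p * lift h p \<partial>\<mu>) = (\<integral> p. indicator KR p / Z * (G p * lift h p) \<partial>LL)"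
    by (rule int_mu) measurable
  also have "\<dots> = (\<integral> x. \<integral> t. indicator KR (x, t) / Z * (G (x, t) * lift h (x, t)) \<partial>lborel \<partial>lborel)"
    using lborel_pair.integral_fst'[OF intLL] by (simp only:)
  also have "\<dots> = (\<integral> x. indicator K x * \<rho> x / Z * (fibre_avg G x * h x) \<partial>lborel)"
  proof (intro Bochner_Integration.integral_cong refl)
    fix x
    have "(\<integral> t. indicator KR (x, t) / Z * (G (x, t) * lift h (x, t)) \<partial>lborel) =
        (\<integral> t. (indicator K x * h x / Z) * (indicator {0..\<rho> x} t * G (x, t)) \<partial>lborel)"
      by (intro Bochner_Integration.integral_cong) (auto simp: lift_def Krho_def indicator_def)
    also have "\<dots> = (indicator K x * h x / Z) * (\<integral> t. indicator {0..\<rho> x} t * G (x, t) \<partial>lborel)"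
      by simp
    also have "\<dots> = indicator K x * \<rho> x / Z * (fibre_avg G x * h x)"
    proof (cases "x \<in> K")
      case False then show ?thesis by simp
    next
      case True
      show ?thesis
      proof (cases "\<rho> x = 0")
        case True then show ?thesis using integral_degenerate_interval[of "\<lambda>t. G (x, t)"] by simp
      next
        case False then show ?thesis by (simp add: fibre_avg_alt)
      qed
    qed
    finally show "(\<integral> t. indicator KR (x, t) / Z * (G (x, t) * lift h (x, t)) \<partial>lborel) =
        indicator K x * \<rho> x / Z * (fibre_avg G x * h x)" .
  qed
  also have "\<dots> = (\<integral> x. fibre_avg G x * h x \<partial>\<pi>)"
    by (rule int_pi[symmetric]) measurable
  finally show ?thesis ..
qed

section \<open>The hybrid slice sampler as a compression of the lifted operator\<close>

lemma kpow_meas: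
  assumes t: "0 \<le> t" and f[measurable]: "f \<in> borel_measurable borel"
  shows "kpow H t j f \<in> borel_measurable borel"
proof (induction j)
  case 0 then show ?case by simp
next
  case (Suc j)
  have "(\<lambda>M. integral\<^sup>L M (kpow H t j f)) \<in> subprob_algebra borel \<rightarrow>\<^sub>M borel"
    by (rule integral_measurable_subprob_algebra[OF Suc.IH])
  from measurable_comp[OF Hext_kernel[of t] this] show ?case
    using t by (simp add: comp_def Hext_pos)
qed

lemma kpow_T:
  assumes f[measurable]: "f \<in> borel_measurable borel"
  shows "(x, t) \<in> KR \<Longrightarrow> kpow H t j f x = (Ht ^^ j) (lift f) (x, t)"
proof (induction j arbitrary: x)
  case 0 then show ?case by (simp add: lift_def)
next
  case (Suc j)
  have t: "0 \<le> t" and xL: "x \<in> L t" using Suc.prems by (auto simp: Krho_def level_def)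
  interpret N: prob_space "H t x" using H_markov t xL by auto
  have sN: "sets (H t x) = sets borel" using H_markov t xL by auto
  have "(Ht ^^ Suc j) (lift f) (x, t) = (\<integral> y. indicator (L t) y * (Ht ^^ j) (lift f) (y, t) \<partial>H t x)"
    using Suc.prems t by (simp add: Ht_def Hext_pos)
  also have "\<dots> = (\<integral> y. indicator (L t) y * kpow H t j f y \<partial>H t x)"
  proof (intro Bochner_Integration.integral_cong refl)
    fix y show "indicator (L t) y * (Ht ^^ j) (lift f) (y, t) = indicator (L t) y * kpow H t j f y"
      using Suc.IH[of y] t by (cases "y \<in> L t") (auto simp: Krho_def level_def)
  qed
  also have "\<dots> = (\<integral> y. kpow H t j f y \<partial>H t x)"
  proof (intro integral_cong_AE)
    have "N.prob (L t) = 1" using H_markov t xL by (auto simp: measure_def)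
    then show "AE y in H t x. indicator (L t) y * kpow H t j f y = kpow H t j f y"
      by (auto dest!: N.AE_prob_1 elim!: eventually_mono)
    show "(\<lambda>y. indicator (L t) y * kpow H t j f y) \<in> borel_measurable (H t x)"
         "kpow H t j f \<in> borel_measurable (H t x)"
      using kpow_meas[OF t f, of j] by (auto simp: sN cong: measurable_cong_sets)
  qed
  finally show ?case by simp
qed

lemma Hk_avg:
  assumes f[measurable]: "f \<in> borel_measurable borel" and j: "1 \<le> j"
  shows "Hk \<rho> H j f x = fibre_avg ((Ht ^^ j) (lift f)) x"
proof -
  have "(LINT t:{0..\<rho> x}|lborel. kpow H t j f x) = (LINT t:{0..\<rho> x}|lborel. (Ht ^^ j) (lift f) (x, t))"
  proof (intro set_lebesgue_integral_cong allI impI)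
    fix t assume t: "t \<in> {0..\<rho> x}"
    show "kpow H t j f x = (Ht ^^ j) (lift f) (x, t)"
    proof (cases "x \<in> K")
      case True then show ?thesis using t by (intro kpow_T) (auto simp: Krho_def)
    next
      case False
      obtain i where i: "j = Suc i" using j by (cases j) auto
      have "H t x = null_measure borel" using H_zero t False by (auto simp: level_def)
      then show ?thesis using False by (simp add: i Ht_def Krho_def)
    qed
  qed auto
  then show ?thesis by (simp add: Hk_def fibre_avg_def)
qed

definition ipm :: "('a \<times> real \<Rightarrow> real) \<Rightarrow> ('a \<times> real \<Rightarrow> real) \<Rightarrow> real" where
  "ipm F G = (\<integral> p. F p * G p \<partial>\<mu>)"

text \<open>VK: square-integrable functions vanishing outside K_rho; the positivity hypothesis on
  Htilde is about these, and Ht maps L2(mu) into them.\<close>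
definition VK :: "('a \<times> real \<Rightarrow> real) set" where
  "VK = {F. F \<in> L2 \<mu> \<and> (\<forall>p. p \<notin> KR \<longrightarrow> F p = 0)}"

lemma VK_L2: "F \<in> VK \<Longrightarrow> F \<in> L2 \<mu>" by (simp add: VK_def)

lemma VK_lin: "F \<in> VK \<Longrightarrow> G \<in> VK \<Longrightarrow> (\<lambda>p. F p + c * G p) \<in> VK"
  by (auto simp: VK_def intro: L2_lin)

lemma Ht_VK: "F \<in> L2 \<mu> \<Longrightarrow> Ht F \<in> VK"
  using Ht_L2(1)[of F] by (auto simp: VK_def Ht_zero)

lemma ipm_comm: "ipm F G = ipm G F" by (simp add: ipm_def mult.commute)

lemma ipm_Ht_sym: "F \<in> L2 \<mu> \<Longrightarrow> G \<in> L2 \<mu> \<Longrightarrow> ipm (Ht F) G = ipm F (Ht G)"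
  unfolding ipm_def by (rule Ht_sym)

lemma ipm_cong: assumes "AE p in \<mu>. F p = F' p" "F \<in> L2 \<mu>" "F' \<in> L2 \<mu>" "G \<in> L2 \<mu>"
  shows "ipm F G = ipm F' G"
proof -
  have [measurable]: "F \<in> borel_measurable (borel \<Otimes>\<^sub>M borel)" "F' \<in> borel_measurable (borel \<Otimes>\<^sub>M borel)"
     "G \<in> borel_measurable (borel \<Otimes>\<^sub>M borel)" using assms by (auto intro: L2_mu_meas)
  show ?thesis unfolding ipm_def using assms(1)
    by (intro int_cong_mu) (auto elim!: eventually_mono)
qed

lemma ipm_lin1: assumes "F \<in> L2 \<mu>" "F' \<in> L2 \<mu>" "G \<in> L2 \<mu>"
  shows "ipm (\<lambda>p. F p + c * F' p) G = ipm F G + c * ipm F' G"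
proof -
  have "ipm (\<lambda>p. F p + c * F' p) G = (\<integral> p. F p * G p + c * (F' p * G p) \<partial>\<mu>)"
    unfolding ipm_def by (simp add: algebra_simps)
  also have "\<dots> = ipm F G + c * ipm F' G"
    using L2_mult[OF assms(1,3)] L2_mult[OF assms(2,3)] by (simp add: ipm_def)
  finally show ?thesis .
qed

lemma ipm_lin2: assumes "F \<in> L2 \<mu>" "G \<in> L2 \<mu>" "G' \<in> L2 \<mu>"
  shows "ipm F (\<lambda>p. G p + c * G' p) = ipm F G + c * ipm F G'"
  using ipm_lin1[OF assms(2,3,1), of c] by (simp add: ipm_comm)

lemma ipm_Cauchy_Schwarz: assumes "u \<in> L2 \<mu>" "v \<in> L2 \<mu>" shows "(ipm u v)^2 \<le> ipm u u * ipm v v"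
  using L2_Cauchy_Schwarz[OF assms] by (simp add: ipm_def power2_eq_square)

lemma ipm_self_nonneg: "0 \<le> ipm u u"
  unfolding ipm_def by simp

lemma const_L2_pi: "(\<lambda>_. c::real) \<in> L2 \<pi>"
proof -
  interpret prob_space \<pi> by (rule prob_pi)
  show ?thesis by (rule L2_const) (rule finite_measure_axioms)
qed

lemma int_L2_pi: "u \<in> L2 \<pi> \<Longrightarrow> integrable \<pi> u"
  using L2_mult[OF const_L2_pi, of u 1] by simp

lemma one_L2: "indicator KR \<in> L2 \<mu>"
  using lift_L2[OF const_L2_pi[of 1]] by (simp add: lift_one)

lemma ipm_one_one: "ipm (indicator KR) (indicator KR) = 1"
proof -
  interpret prob_space \<pi> by (rule prob_pi)
  show ?thesis unfolding lift_one[symmetric] ipm_def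
    by (subst lift_inner) (auto intro: const_L2_pi simp: prob_space)
qed

lemma Ht_pow_VK: assumes f: "f \<in> L2 \<pi>" shows "(Ht ^^ n) (lift f) \<in> VK"
proof (cases n)
  case 0 then show ?thesis using lift_L2[OF f] by (simp add: VK_def lift_def)
next
  case (Suc i)
  have "(Ht ^^ i) (lift f) \<in> L2 \<mu>" by (induction i) (auto intro: lift_L2[OF f] Ht_L2(1))
  then show ?thesis by (simp add: Suc Ht_VK)
qed

lemma Hk_L2: assumes f: "f \<in> L2 \<pi>" and j: "1 \<le> j" shows "Hk \<rho> H j f \<in> L2 \<pi>"
proof -
  have [measurable]: "f \<in> borel_measurable borel" using f by (rule L2_pi_meas)
  have "Hk \<rho> H j f = fibre_avg ((Ht ^^ j) (lift f))" by (rule ext) (rule Hk_avg[OF _ j]; simp)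
  with fibre_avg_L2(1)[OF VK_L2[OF Ht_pow_VK[OF f]]] show ?thesis by simp
qed

abbreviation "S f \<equiv> (\<integral> y. f y \<partial>\<pi>)"

lemma centred_L2: assumes u: "u \<in> L2 \<pi>" and j: "1 \<le> j" shows "(\<lambda>x. Hk \<rho> H j u x - S u) \<in> L2 \<pi>"
  using L2_diff[OF Hk_L2[OF u j] const_L2_pi] .

text \<open>The centred orbit of f: the n-th iterate of Ht on the lift of f, minus the mean S f.
  Since Ht fixes the constant 1, it is an orbit of Ht up to mu-null sets.\<close>
definition orbit :: "('a \<Rightarrow> real) \<Rightarrow> nat \<Rightarrow> 'a \<times> real \<Rightarrow> real" where
  "orbit f n = (\<lambda>p. (Ht ^^ n) (lift f) p + (- S f) * indicator KR p)"

lemma orbit_VK: "f \<in> L2 \<pi> \<Longrightarrow> orbit f n \<in> VK"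
  unfolding orbit_def using one_L2 by (intro VK_lin Ht_pow_VK) (auto simp: VK_def)

lemma orbit_step:
  assumes f: "f \<in> L2 \<pi>" shows "AE p in \<mu>. Ht (orbit f n) p = orbit f (Suc n) p"
  using Ht_lin[OF VK_L2[OF Ht_pow_VK[OF f, of n]] one_L2, where c="- S f"]
  by eventually_elim (simp add: orbit_def Ht_KR[abs_def])

lemma ipm_Ht_pow_one: assumes f: "f \<in> L2 \<pi>" shows "ipm ((Ht ^^ n) (lift f)) (indicator KR) = S f"
proof (induction n)
  case 0 then show ?case
    unfolding lift_one[symmetric] ipm_def by (simp add: lift_inner[OF f const_L2_pi])
next
  case (Suc n)
  have "ipm ((Ht ^^ Suc n) (lift f)) (indicator KR) = ipm ((Ht ^^ n) (lift f)) (Ht (indicator KR))"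
    by (simp add: ipm_Ht_sym[OF VK_L2[OF Ht_pow_VK[OF f]] one_L2])
  then show ?case using Suc by (simp add: Ht_KR[abs_def])
qed

lemma orbit_inner:
  assumes f: "f \<in> L2 \<pi>" and g: "g \<in> L2 \<pi>"
  shows "ipm (orbit f n) (orbit g 0) = ipm ((Ht ^^ n) (lift f)) (lift g) - S f * S g"
proof -
  define F where "F = (Ht ^^ n) (lift f)"
  have F: "F \<in> L2 \<mu>" and G: "lift g \<in> L2 \<mu>" and Y: "orbit g 0 \<in> L2 \<mu>"
    using VK_L2[OF Ht_pow_VK[OF f]] lift_L2[OF g] VK_L2[OF orbit_VK[OF g]] by (auto simp: F_def)
  have orbit_f: "orbit f n = (\<lambda>p. F p + (- S f) * indicator KR p)" by (simp add: orbit_def F_def)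
  have orbit_g: "orbit g 0 = (\<lambda>p. lift g p + (- S g) * indicator KR p)" by (simp add: orbit_def)
  have "ipm (orbit f n) (orbit g 0) = ipm F (orbit g 0) + (- S f) * ipm (indicator KR) (orbit g 0)"
    unfolding orbit_f by (rule ipm_lin1[OF F one_L2 Y])
  also have "ipm F (orbit g 0) = ipm F (lift g) + (- S g) * ipm F (indicator KR)"
    unfolding orbit_g by (rule ipm_lin2[OF F G one_L2])
  also have "ipm (indicator KR) (orbit g 0) = ipm (indicator KR) (lift g) + (- S g) * ipm (indicator KR) (indicator KR)"
    unfolding orbit_g by (rule ipm_lin2[OF one_L2 G one_L2])
  also have "ipm F (indicator KR) = S f" unfolding F_def by (rule ipm_Ht_pow_one[OF f])
  also have "ipm (indicator KR) (lift g) = S g"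
    using ipm_Ht_pow_one[OF g, of 0] by (simp add: ipm_comm)
  finally show ?thesis by (simp add: ipm_one_one F_def algebra_simps)
qed

lemma orbit_inner_Hk:
  assumes f: "f \<in> L2 \<pi>" and g: "g \<in> L2 \<pi>" and n: "1 \<le> n"
  shows "ipm (orbit f n) (orbit g 0) = (\<integral> x. (Hk \<rho> H n f x - S f) * g x \<partial>\<pi>)"
proof -
  have [measurable]: "f \<in> borel_measurable borel" using f by (rule L2_pi_meas)
  have "ipm ((Ht ^^ n) (lift f)) (lift g) = (\<integral> x. Hk \<rho> H n f x * g x \<partial>\<pi>)"
    unfolding ipm_def using fibre_avg_inner[OF VK_L2[OF Ht_pow_VK[OF f]] g] Hk_avg[OF _ n, of f] by simp
  moreover have "(\<integral> x. (Hk \<rho> H n f x - S f) * g x \<partial>\<pi>) = (\<integral> x. Hk \<rho> H n f x * g x \<partial>\<pi>) - S f * S g"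
  proof -
    have "(\<integral> x. (Hk \<rho> H n f x - S f) * g x \<partial>\<pi>) = (\<integral> x. Hk \<rho> H n f x * g x - S f * g x \<partial>\<pi>)"
      by (simp add: algebra_simps)
    then show ?thesis using L2_mult[OF Hk_L2[OF f n] g] int_L2_pi[OF g] by simp
  qed
  ultimately show ?thesis using orbit_inner[OF f g] by simp
qed

lemma orbit_inner_0:
  assumes f: "f \<in> L2 \<pi>" shows "ipm (orbit f 0) (orbit f 0) \<le> (\<integral> x. (f x)^2 \<partial>\<pi>)"
  using orbit_inner[OF f f, of 0] lift_inner[OF f f] by (simp add: ipm_def power2_eq_square)

end

section \<open>Positivity of the lifted operator\<close>

locale slice = slice_kernel +
  assumes Htilde_psd: "psd (mu_meas K \<rho>) (Htilde K \<rho> H)"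
begin

text \<open>On functions vanishing outside K_rho, Ht agrees with Htilde, so its quadratic form is
  nonnegative.\<close>
lemma Ht_Htilde: assumes "F \<in> VK" shows "Ht F p * F p = Htilde K \<rho> H F p * F p"
proof (cases "p \<in> KR")
  case False
  then have "F p = 0" using assms unfolding VK_def by blast
  then show ?thesis by simp
next
  case True
  obtain x s where p: "p = (x, s)" by (cases p)
  with True have s: "0 \<le> s" by (auto simp: Krho_def)
  show ?thesis using True s by (simp add: p Ht_def Htilde_def Hext_pos)
qed

lemma Ht_psd: assumes F: "F \<in> VK" shows "0 \<le> ipm (Ht F) F"
proof -
  have "0 \<le> (\<integral> p. Htilde K \<rho> H F p * F p \<partial>\<mu>)" using Htilde_psd F by (auto simp: psd_def VK_def)
  also have "(\<lambda>p. Htilde K \<rho> H F p * F p) = (\<lambda>p. Ht F p * F p)" by (rule ext) (simp add: Ht_Htilde[OF F])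
  finally show ?thesis by (simp add: ipm_def)
qed

lemma Ht_Cauchy_Schwarz:
  assumes u: "u \<in> VK" and v: "v \<in> VK"
  shows "(ipm (Ht u) v)^2 \<le> ipm (Ht u) u * ipm (Ht v) v"
proof (rule quadratic_nonneg_discriminant)
  show "0 \<le> ipm (Ht v) v" by (rule Ht_psd[OF v])
  fix t :: real
  define w where "w = (\<lambda>p. u p + (-t) * v p)"
  have w: "w \<in> VK" unfolding w_def by (intro VK_lin u v)
  have uL: "u \<in> L2 \<mu>" and vL: "v \<in> L2 \<mu>" using u v by (auto simp: VK_def)
  have TuL: "Ht u \<in> L2 \<mu>" and TvL: "Ht v \<in> L2 \<mu>" using Ht_L2 uL vL by auto
  have "ipm (Ht w) w = ipm (\<lambda>p. Ht u p + (-t) * Ht v p) w"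
    using Ht_lin[OF uL vL, of "-t"] Ht_L2(1)[OF VK_L2[OF w]] L2_lin[OF TuL TvL, of "-t"] VK_L2[OF w]
    by (intro ipm_cong) (auto simp: w_def)
  also have "\<dots> = ipm (Ht u) w - t * ipm (Ht v) w"
    using ipm_lin1[OF TuL TvL VK_L2[OF w], of "-t"] by simp
  also have "ipm (Ht u) w = ipm (Ht u) u - t * ipm (Ht u) v"
    unfolding w_def using ipm_lin2[OF TuL uL vL, of "-t"] by simp
  also have "ipm (Ht v) w = ipm (Ht v) u - t * ipm (Ht v) v"
    unfolding w_def using ipm_lin2[OF TvL uL vL, of "-t"] by simp
  also have "ipm (Ht v) u = ipm (Ht u) v"
    using ipm_Ht_sym[OF vL uL] by (simp add: ipm_comm)
  finally have "ipm (Ht w) w = ipm (Ht u) u - 2 * t * ipm (Ht u) v + t^2 * ipm (Ht v) v"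
    by (simp add: power2_eq_square algebra_simps)
  then show "0 \<le> ipm (Ht u) u - 2 * t * ipm (Ht u) v + t^2 * ipm (Ht v) v"
    using Ht_psd[OF w] by simp
qed

lemma ae_orbit_inner_shift:
  assumes y_VK: "\<And>j. y j \<in> VK" and step: "\<And>j. AE p in \<mu>. Ht (y j) p = y (Suc j) p"
  shows "ipm (y a) (y b) = ipm (y (a + b)) (y 0)"
    and "G \<in> L2 \<mu> \<Longrightarrow> ipm (y (Suc a)) G = ipm (Ht (y a)) G"
proof -
  have y_L2: "y j \<in> L2 \<mu>" for j using y_VK[of j] by (rule VK_L2)
  have ipm_step: "ipm (Ht (y j)) G = ipm (y (Suc j)) G" if "G \<in> L2 \<mu>" for j G
    using step[of j] Ht_L2(1)[OF y_L2] y_L2 that by (intro ipm_cong)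
  then show "G \<in> L2 \<mu> \<Longrightarrow> ipm (y (Suc a)) G = ipm (Ht (y a)) G" by simp
  have shift: "ipm (y (Suc a)) (y b) = ipm (y a) (y (Suc b))" for a b
  proof -
    have "ipm (y (Suc a)) (y b) = ipm (Ht (y a)) (y b)" using ipm_step[OF y_L2] by simp
    also have "\<dots> = ipm (y a) (Ht (y b))" using ipm_Ht_sym[OF y_L2 y_L2] by simp
    also have "\<dots> = ipm (Ht (y b)) (y a)" by (rule ipm_comm)
    also have "\<dots> = ipm (y (Suc b)) (y a)" using ipm_step[OF y_L2] by simp
    finally show ?thesis by (simp add: ipm_comm)
  qed
  show "ipm (y a) (y b) = ipm (y (a + b)) (y 0)"
  proof (induction a arbitrary: b)
    case 0 then show ?case by (simp add: ipm_comm)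
  next
    case (Suc a) then show ?case using shift[of a b] by simp
  qed
qed

text \<open>Hence the moments along such an orbit are nonnegative and log-convex: even moments are
  squared norms, odd ones values of the positive form, and log-convexity is Cauchy--Schwarz
  for the inner product resp. for the form.\<close>
lemma ae_orbit_log_convex:
  assumes y_VK: "\<And>j. y j \<in> VK" and step: "\<And>j. AE p in \<mu>. Ht (y j) p = y (Suc j) p"
  defines "m \<equiv> \<lambda>n. ipm (y n) (y 0)"
  shows "0 \<le> m n" and "(m (Suc n))^2 \<le> m n * m (Suc (Suc n))"
proof -
  have y_L2: "y j \<in> L2 \<mu>" for j using y_VK[of j] by (rule VK_L2)
  have ipm_m: "ipm (y a) (y b) = m (a + b)" for a b
    unfolding m_def by (rule ae_orbit_inner_shift(1)[of y, OF y_VK step])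
  have odd_m: "m (Suc (a + a)) = ipm (Ht (y a)) (y a)" for a
    using ipm_m[of "Suc a" a] ae_orbit_inner_shift(2)[of y, OF y_VK step y_L2, of a a] by simp
  show "0 \<le> m n"
  proof (cases "even n")
    case True then obtain a where n: "n = a + a" by (metis evenE mult_2)
    show ?thesis using ipm_m[of a a] ipm_self_nonneg[of "y a"] by (simp add: n)
  next
    case False then obtain a where n: "n = Suc (a + a)" by (metis oddE mult_2 Suc_eq_plus1)
    show ?thesis using odd_m[of a] Ht_psd[OF y_VK] by (simp add: n)
  qed
  show "(m (Suc n))^2 \<le> m n * m (Suc (Suc n))"
  proof (cases "even n")
    case True then obtain a where n: "n = a + a" by (metis evenE mult_2)
    have "(m (Suc n))^2 = (ipm (y (Suc a)) (y a))^2" using ipm_m[of "Suc a" a] by (simp add: n)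
    also have "\<dots> \<le> ipm (y (Suc a)) (y (Suc a)) * ipm (y a) (y a)" by (rule ipm_Cauchy_Schwarz[OF y_L2 y_L2])
    also have "\<dots> = m n * m (Suc (Suc n))" using ipm_m[of "Suc a" "Suc a"] ipm_m[of a a] by (simp add: n)
    finally show ?thesis .
  next
    case False then obtain a where n: "n = Suc (a + a)" by (metis oddE mult_2 Suc_eq_plus1)
    have "(m (Suc n))^2 = (ipm (Ht (y a)) (y (Suc a)))^2"
      using ipm_m[of "Suc a" "Suc a"] ae_orbit_inner_shift(2)[of y, OF y_VK step y_L2, of a "Suc a"] by (simp add: n)
    also have "\<dots> \<le> ipm (Ht (y a)) (y a) * ipm (Ht (y (Suc a))) (y (Suc a))" by (rule Ht_Cauchy_Schwarz[OF y_VK y_VK])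
    also have "\<dots> = m n * m (Suc (Suc n))" using odd_m[of a] odd_m[of "Suc a"] by (simp add: n)
    finally show ?thesis .
  qed
qed

definition Pform :: "('a \<Rightarrow> real) \<Rightarrow> ('a \<Rightarrow> real) \<Rightarrow> real" where
  "Pform u v = (\<integral> x. (Hk \<rho> H 1 u x - S u) * v x \<partial>\<pi>)"

lemma Pform_orbit: assumes u: "u \<in> L2 \<pi>" and v: "v \<in> L2 \<pi>"
  shows "Pform u v = ipm (Ht (orbit u 0)) (orbit v 0)"
  using orbit_inner_Hk[OF u v, of 1] ipm_cong[OF orbit_step[OF u, of 0]] orbit_VK u v
  by (simp add: Pform_def VK_L2 Ht_L2)

lemma Pform_nonneg: "u \<in> L2 \<pi> \<Longrightarrow> 0 \<le> Pform u u"
  by (simp add: Pform_orbit Ht_psd orbit_VK)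

lemma Pform_Cauchy_Schwarz: "u \<in> L2 \<pi> \<Longrightarrow> v \<in> L2 \<pi> \<Longrightarrow> (Pform u v)^2 \<le> Pform u u * Pform v v"
  by (simp add: Pform_orbit Ht_Cauchy_Schwarz orbit_VK)

lemma moment_inequality:
  assumes f: "f \<in> L2 \<pi>" and k: "1 \<le> k"
  shows "(Pform f f) ^ k \<le> (\<integral> x. (f x)^2 \<partial>\<pi>) ^ (k - 1) * (\<integral> x. (Hk \<rho> H k f x - S f) * f x \<partial>\<pi>)"
proof -
  define m where "m n = ipm (orbit f n) (orbit f 0)" for n
  have m_nn: "0 \<le> m n" and lc: "(m (Suc n))^2 \<le> m n * m (Suc (Suc n))" for n
    using ae_orbit_log_convex[of "orbit f", OF orbit_VK[OF f] orbit_step[OF f]] by (simp_all add: m_def)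
  obtain j where kj: "k = Suc j" using k by (cases k) auto
  have "m 1 ^ k \<le> m 0 ^ (k - 1) * m k"
    using log_convex_power_bound[of m j, OF m_nn lc] by (simp add: kj)
  also have "\<dots> \<le> (\<integral> x. (f x)^2 \<partial>\<pi>) ^ (k - 1) * m k"
    using orbit_inner_0[OF f] m_nn by (intro mult_right_mono power_mono) (simp_all add: m_def)
  finally show ?thesis
    using orbit_inner_Hk[OF f f, of 1] orbit_inner_Hk[OF f f k] by (simp add: m_def Pform_def)
qed

text \<open>Combining the moment inequality with Cauchy--Schwarz in L2(pi): if b bounds H^(k) - S,
  then the k-th root of b bounds the form of H - S.\<close>
lemma Pform_bound:
  assumes k: "1 \<le> k" and b: "0 \<le> b"
    and hk: "\<And>g. g \<in> L2 \<pi> \<Longrightarrow> (\<integral> x. (Hk \<rho> H k g x - S g)^2 \<partial>\<pi>) \<le> b^2 * (\<integral> x. (g x)^2 \<partial>\<pi>)"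
    and u: "u \<in> L2 \<pi>"
  shows "Pform u u \<le> root k b * (\<integral> x. (u x)^2 \<partial>\<pi>)"
proof -
  define N where "N = (\<integral> x. (u x)^2 \<partial>\<pi>)"
  have N: "0 \<le> N" by (simp add: N_def)
  have "(\<integral> x. (Hk \<rho> H k u x - S u) * u x \<partial>\<pi>) \<le> sqrt (\<integral> x. (Hk \<rho> H k u x - S u)^2 \<partial>\<pi>) * sqrt N"
    unfolding N_def by (rule L2_Cauchy_Schwarz_sqrt[OF centred_L2[OF u k] u])
  also have "\<dots> \<le> sqrt (b^2 * N) * sqrt N"
    using hk[OF u] N by (intro mult_right_mono real_sqrt_le_mono) (auto simp: N_def)
  also have "\<dots> = b * N" using b N by (simp add: real_sqrt_mult)
  finally have mk: "(\<integral> x. (Hk \<rho> H k u x - S u) * u x \<partial>\<pi>) \<le> b * N" .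
  have "(Pform u u) ^ k \<le> N ^ (k - 1) * (\<integral> x. (Hk \<rho> H k u x - S u) * u x \<partial>\<pi>)"
    using moment_inequality[OF u k] by (simp add: N_def)
  also have "\<dots> \<le> N ^ (k - 1) * (b * N)" using mk N by (intro mult_left_mono) auto
  also have "\<dots> = b * N ^ k" using k by (cases k) auto
  finally have pk: "(Pform u u) ^ k \<le> b * N ^ k" .
  have "Pform u u = root k ((Pform u u) ^ k)" using Pform_nonneg[OF u] k by (simp add: real_root_power_cancel)
  also have "\<dots> \<le> root k (b * N ^ k)" using pk k by (simp add: real_root_le_iff)
  also have "\<dots> = root k b * N" using k N by (simp add: real_root_mult real_root_power_cancel)
  finally show ?thesis by (simp add: N_def)
qed

text \<open>Cauchy--Schwarz for the form Pform converts the bound on the form into an operator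
  norm bound for H - S: with v = (H - S) u, one has |v|^2 = Pform u v.\<close>
lemma Hk1_bound:
  assumes k: "1 \<le> k" and b: "0 \<le> b"
    and hk: "\<And>g. g \<in> L2 \<pi> \<Longrightarrow> (\<integral> x. (Hk \<rho> H k g x - S g)^2 \<partial>\<pi>) \<le> b^2 * (\<integral> x. (g x)^2 \<partial>\<pi>)"
    and u: "u \<in> L2 \<pi>"
  shows "(\<integral> x. (Hk \<rho> H 1 u x - S u)^2 \<partial>\<pi>) \<le> (root k b)^2 * (\<integral> x. (u x)^2 \<partial>\<pi>)"
proof -
  define v where "v = (\<lambda>x. Hk \<rho> H 1 u x - S u)"
  have v: "v \<in> L2 \<pi>" unfolding v_def by (rule centred_L2[OF u]) simp
  define \<beta> where "\<beta> = root k b"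
  have \<beta>: "0 \<le> \<beta>" using b by (simp add: \<beta>_def real_root_ge_zero)
  define Nv where "Nv = (\<integral> x. (v x)^2 \<partial>\<pi>)"
  define Nu where "Nu = (\<integral> x. (u x)^2 \<partial>\<pi>)"
  have Nv: "0 \<le> Nv" and Nu: "0 \<le> Nu" by (simp_all add: Nv_def Nu_def)
  have Puv: "Pform u v = Nv" by (simp add: Pform_def Nv_def v_def power2_eq_square)
  have "Nv^2 \<le> Pform u u * Pform v v" using Pform_Cauchy_Schwarz[OF u v] by (simp add: Puv)
  also have "\<dots> \<le> (\<beta> * Nu) * (\<beta> * Nv)"
    using Pform_bound[OF k b hk u] Pform_bound[OF k b hk v] Pform_nonneg[OF u] Pform_nonneg[OF v] \<beta> Nu Nv
    by (intro mult_mono) (auto simp: \<beta>_def Nu_def Nv_def)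
  finally have "Nv * Nv \<le> (\<beta>^2 * Nu) * Nv" by (simp add: power2_eq_square algebra_simps)
  then have "Nv \<le> \<beta>^2 * Nu"
    using Nv by (cases "Nv = 0") (auto simp: \<beta> Nu intro: mult_right_le_imp_le)
  then show ?thesis by (simp add: Nv_def Nu_def v_def \<beta>_def)
qed

end

theorem lemma3p6:
  fixes K :: "'a::euclidean_space set" and \<rho> :: "'a \<Rightarrow> real"
    and H :: "real \<Rightarrow> 'a \<Rightarrow> 'a measure" and k :: nat
  assumes K_borel: "K \<in> sets borel"
    and rho_meas: "\<rho> \<in> borel_measurable borel"
    and rho_nonneg: "\<forall>x\<in>K. 0 \<le> \<rho> x"
    and rho_int_pos: "0 < (\<integral>\<^sup>+ x. ennreal (indicator K x * \<rho> x) \<partial>lborel)"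
    and rho_int_fin: "(\<integral>\<^sup>+ x. ennreal (indicator K x * \<rho> x) \<partial>lborel) < \<infinity>"
    and level_vol: "\<forall>t. 0 < t \<and> ereal t < esssup lborel (\<lambda>x. ereal (indicator K x * \<rho> x)) \<longrightarrow>
        0 < emeasure lborel (level K \<rho> t) \<and> emeasure lborel (level K \<rho> t) < \<infinity>"
    and H_markov: "\<forall>t\<ge>0. \<forall>x \<in> level K \<rho> t.
        prob_space (H t x) \<and> sets (H t x) = sets borel \<and> emeasure (H t x) (level K \<rho> t) = 1"
    and H_zero: "\<forall>t\<ge>0. \<forall>x. x \<notin> level K \<rho> t \<longrightarrow> H t x = null_measure borel"
    and H_meas: "(\<lambda>(t, x). H t x) \<in> measurable (restrict_space borel {0..} \<Otimes>\<^sub>M borel) (subprob_algebra borel)"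
    and H_rev: "\<forall>t\<ge>0. 0 < emeasure lborel (level K \<rho> t) \<and> emeasure lborel (level K \<rho> t) < \<infinity> \<longrightarrow>
        (\<forall>A \<in> sets borel. \<forall>B \<in> sets borel. A \<subseteq> level K \<rho> t \<longrightarrow> B \<subseteq> level K \<rho> t \<longrightarrow>
          (\<integral>\<^sup>+ x. indicator A x * emeasure (H t x) B \<partial>uniform_measure lborel (level K \<rho> t)) =
          (\<integral>\<^sup>+ x. indicator B x * emeasure (H t x) A \<partial>uniform_measure lborel (level K \<rho> t)))"
    and Htilde_psd: "psd (mu_meas K \<rho>) (Htilde K \<rho> H)"
    and k_pos: "1 \<le> k"
  shows "opnorm (pi_meas K \<rho>) (\<lambda>f x. Hk \<rho> H 1 f x - (\<integral>y. f y \<partial>pi_meas K \<rho>)) ^ k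
         \<le> opnorm (pi_meas K \<rho>) (\<lambda>f x. Hk \<rho> H k f x - (\<integral>y. f y \<partial>pi_meas K \<rho>))"
proof -
  interpret slice K \<rho> H
    by unfold_locales (fact K_borel rho_meas rho_nonneg rho_int_pos rho_int_fin H_markov H_zero H_meas H_rev Htilde_psd)+
  show ?thesis
  proof (rule opnorm_power_le[OF k_pos])
    show "\<And>f. f \<in> L2 \<pi> \<Longrightarrow> (\<lambda>x. Hk \<rho> H 1 f x - S f) \<in> L2 \<pi>"
      by (simp add: centred_L2)
    show "\<And>f. f \<in> L2 \<pi> \<Longrightarrow> (\<lambda>x. Hk \<rho> H k f x - S f) \<in> L2 \<pi>"
      by (rule centred_L2[OF _ k_pos])
    show "\<forall>f \<in> L2 \<pi>. (\<integral> x. (Hk \<rho> H 1 f x - S f)^2 \<partial>\<pi>) \<le> (root k b)^2 * (\<integral> x. (f x)^2 \<partial>\<pi>)"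
      if "0 \<le> b" "\<forall>g \<in> L2 \<pi>. (\<integral> x. (Hk \<rho> H k g x - S g)^2 \<partial>\<pi>) \<le> b^2 * (\<integral> x. (g x)^2 \<partial>\<pi>)" for b
      using Hk1_bound[OF k_pos that(1)] that(2) by blast
  qed
qed

end
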